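(* Let $\Gamma$ be a finite nilpotent group of order $n=\prod_{p\mid n}p^{v_p}$, and for each prime $p\mid n$ let $\Gamma_p$ denote the Sylow $p$-subgroup of $\Gamma$. Then for every nilpotent group $G$ of order $n$, with Sylow $p$-subgroups $G_p$, we have $$e(\Gamma,G)=\prod_{p\mid n} e(\Gamma_p,G_p).$$
   Context: For finite groups $\Gamma$ and $G$ of the same order, $e(\Gamma,G)$ denotes the number of Hopf-Galois structures of type $G$ on a Galois field extension $L/K$ with $\mathrm{Gal}(L/K)\cong\Gamma$. Here a Hopf-Galois structure given by a $K$-Hopf algebra $H$ has type $G$ if $L\otimes_K H\cong L[G]$ for the corresponding regular permutation group $G$ on $\Gamma$ (Greither–Pareigis). Equivalently (and this is the working definition), $e(\Gamma,G)$ is the number of equivalence classes of regular embeddings $\beta:\Gamma\to\mathrm{Hol}(G)$, where $\mathrm{Hol}(G)=\rho(G)\cdot\mathrm{Aut}(G)\subseteq \mathrm{Perm}(G)$ is the holomorph of $G$ with $\rho(g)(x)=xg^{-1}$, a regular embedding is an injective homomorphism whose image acts regularly (simply transitively) on $G$, and two regular embeddings are equivalent if they are conjugate by an element of $\mathrm{Aut}(G)$. A finite group is nilpotent iff it is the direct product of its Sylow subgroups. *)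

theory Defs
  imports "HOL-Algebra.Algebra" "HOL-Computational_Algebra.Primes"
begin

fun lower_central :: "('a, 'b) monoid_scheme \<Rightarrow> nat \<Rightarrow> 'a set" where
  "lower_central G 0 = carrier G"
| "lower_central G (Suc i) =
     generate G (\<Union>x \<in> carrier G. \<Union>y \<in> lower_central G i.
        {x \<otimes>\<^bsub>G\<^esub> y \<otimes>\<^bsub>G\<^esub> inv\<^bsub>G\<^esub> x \<otimes>\<^bsub>G\<^esub> inv\<^bsub>G\<^esub> y})"

definition nilpotent_group :: "('a, 'b) monoid_scheme \<Rightarrow> bool" where
  "nilpotent_group G \<longleftrightarrow> group G \<and> (\<exists>k. lower_central G k = {\<one>\<^bsub>G\<^esub>})"

(* Holomorph Hol(G) = rho(G) Aut(G) inside Perm(G), rho(g)(x) = x g^{-1} *)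
definition holomorph :: "('a, 'b) monoid_scheme \<Rightarrow> ('a \<Rightarrow> 'a) set" where
  "holomorph G = {f. \<exists>\<alpha> \<in> auto G. \<exists>g \<in> carrier G.
      f = (\<lambda>x \<in> carrier G. \<alpha> x \<otimes>\<^bsub>G\<^esub> inv\<^bsub>G\<^esub> g)}"

definition regular_embeddings ::
  "('a, 'c) monoid_scheme \<Rightarrow> ('b, 'd) monoid_scheme \<Rightarrow> ('a \<Rightarrow> 'b \<Rightarrow> 'b) set" where
  "regular_embeddings \<Gamma> G = {\<beta>.
      \<beta> \<in> extensional (carrier \<Gamma>) \<and>
      \<beta> \<in> hom \<Gamma> (BijGroup (carrier G)) \<and>
      inj_on \<beta> (carrier \<Gamma>) \<and>
      \<beta> ` carrier \<Gamma> \<subseteq> holomorph G \<and>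
      (\<forall>x \<in> carrier G. \<forall>y \<in> carrier G. \<exists>!\<gamma>. \<gamma> \<in> carrier \<Gamma> \<and> \<beta> \<gamma> x = y)}"

definition aut_conj_rel ::
  "('a, 'c) monoid_scheme \<Rightarrow> ('b, 'd) monoid_scheme \<Rightarrow> (('a \<Rightarrow> 'b \<Rightarrow> 'b) \<times> ('a \<Rightarrow> 'b \<Rightarrow> 'b)) set" where
  "aut_conj_rel \<Gamma> G = {(\<beta>, \<beta>'). \<beta> \<in> regular_embeddings \<Gamma> G \<and> \<beta>' \<in> regular_embeddings \<Gamma> G \<and>
      (\<exists>\<alpha> \<in> auto G. \<forall>\<gamma> \<in> carrier \<Gamma>. \<forall>x \<in> carrier G. \<beta>' \<gamma> (\<alpha> x) = \<alpha> (\<beta> \<gamma> x))}"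

definition hgs_count :: "('a, 'c) monoid_scheme \<Rightarrow> ('b, 'd) monoid_scheme \<Rightarrow> nat" where
  "hgs_count \<Gamma> G = card (regular_embeddings \<Gamma> G // aut_conj_rel \<Gamma> G)"

definition sylow_subgroup :: "('a, 'b) monoid_scheme \<Rightarrow> nat \<Rightarrow> 'a set \<Rightarrow> bool" where
  "sylow_subgroup G p P \<longleftrightarrow> subgroup P G \<and>
      card P = p ^ multiplicity p (order G)"

end

theory Submission
  imports Defs
begin

text \<open>
  Sylow subgroups of a finite nilpotent group are normal, because normalizers grow in nilpotent
  groups; so \<open>\<Gamma>\<close> and G are the internal direct products of their Sylow subgroups, and by
  induction over the primes it suffices to split off one coprime factor at a time.

  So let \<open>K = A \<times> B\<close> and \<open>G = C \<times> D\<close> with |A| = |C| and |B| = |D| coprime. Then C consists of the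
  elements of G of order dividing |C|, so C and D are characteristic and every element of Hol(G)
  acts on the C-component of x through the C-component of x only. For a regular embedding
  \<open>\<beta>\<close> of K, a stabiliser count shows that \<open>\<beta>(b)\<close> fixes C-components for b in B; consequently
  \<open>\<beta>(a)\<close> preserves C and \<open>\<beta>(a b)(c d) = \<beta>(a)(c) \<beta>(b)(d)\<close>. Restriction to A on C and to B on D,
  and this formula backwards, are mutually inverse bijections between regular embeddings of K
  and pairs of regular embeddings of A and B; since Aut(G) = Aut(C) \<times> Aut(D) they respect
  conjugacy, so \<open>e(K, G) = e(A, C) e(B, D)\<close>.
\<close>

section \<open>Coprime normal subgroups\<close>

lemma (in group) card_dvd_of_subgroup_subset:
  assumes "subgroup H G" "subgroup I G" "I \<subseteq> H"
  shows "card I dvd card H"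
proof -
  interpret H: group "G\<lparr>carrier := H\<rparr>" using subgroup_imp_group[OF assms(1)] .
  have "card (rcosets\<^bsub>G\<lparr>carrier := H\<rparr>\<^esub> I) * card I = card H"
    using H.lagrange[OF subgroup_incl[OF assms(2,1,3)]] by (simp add: order_def)
  then show ?thesis by (metis dvd_triv_right)
qed

lemma (in group) pow_card_subgroup_eq_one:
  assumes "subgroup H G" "finite H" "x \<in> H"
  shows "x [^] card H = \<one>"
proof -
  interpret H: group "G\<lparr>carrier := H\<rparr>" using subgroup_imp_group[OF assms(1)] .
  have "x [^]\<^bsub>G\<lparr>carrier := H\<rparr>\<^esub> order (G\<lparr>carrier := H\<rparr>) = \<one>\<^bsub>G\<lparr>carrier := H\<rparr>\<^esub>"
    using H.pow_order_eq_1 assms(3) by simp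
  then show ?thesis by (simp add: order_def nat_pow_consistent[symmetric])
qed

lemma (in group) eq_one_if_pow_coprime_eq_one:
  assumes "x \<in> carrier G" "x [^] (m::nat) = \<one>" "x [^] (k::nat) = \<one>" "coprime m k"
  shows "x = \<one>"
proof -
  have "ord x dvd m" "ord x dvd k" using assms pow_eq_id by auto
  then have "ord x dvd gcd m k" by simp
  then have "ord x = 1" using assms(4) by simp
  then show ?thesis using assms(1) ord_eq_1 by simp
qed

lemma (in group) card_set_mult_normal:
  assumes N: "N \<lhd> G" and H: "subgroup H G"
  shows "card (N <#> H) * card (N \<inter> H) = card N * card H"
proof -
  let ?r = "card (rcosets\<^bsub>G\<lparr>carrier := N <#> H\<rparr>\<^esub> N)"
  interpret NH: group "G\<lparr>carrier := N <#> H\<rparr>"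
    using subgroup_imp_group[OF mult_norm_subgroup[OF N H]] .
  interpret H: group "G\<lparr>carrier := H\<rparr>" using subgroup_imp_group[OF H] .
  have "?r = card (rcosets\<^bsub>G\<lparr>carrier := H\<rparr>\<^esub> (N \<inter> H))"
    using iso_same_card[OF weak_snd_iso_thme[OF H N]] by (simp add: FactGroup_def)
  moreover have "?r * card N = card (N <#> H)"
    using NH.lagrange[OF normal_imp_subgroup[OF normal_in_normal_set_mult[OF N H]]]
    by (simp add: order_def)
  moreover have "card (rcosets\<^bsub>G\<lparr>carrier := H\<rparr>\<^esub> (N \<inter> H)) * card (N \<inter> H) = card H"
    using H.lagrange[OF subgroup_incl[OF subgroups_Inter_pair[OF normal_imp_subgroup[OF N] H] H]]
    by (simp add: order_def)
  ultimately show ?thesis by (metis mult.assoc mult.commute)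
qed

locale coprime_normal_subgroups = group K for K (structure) +
  fixes A B
  assumes normal_A: "A \<lhd> K" and normal_B: "B \<lhd> K"
    and finite_carrier: "finite (carrier K)"
    and coprime_card: "coprime (card A) (card B)"
begin

lemma subgroup_A: "subgroup A K" and subgroup_B: "subgroup B K"
  using normal_A normal_B normal_imp_subgroup by auto

lemma A_subset: "A \<subseteq> carrier K" and B_subset: "B \<subseteq> carrier K"
  using subgroup_A subgroup_B subgroup.subset by auto

lemma finite_A: "finite A" and finite_B: "finite B"
  using A_subset B_subset finite_carrier finite_subset by auto

lemma swap: "coprime_normal_subgroups K B A"
  unfolding coprime_normal_subgroups_def coprime_normal_subgroups_axioms_def
  using is_group normal_A normal_B finite_carrier coprime_card by (simp add: coprime_commute)

lemma inter_eq_one: "A \<inter> B = {\<one>}"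
proof -
  have AB: "subgroup (A \<inter> B) K" using subgroups_Inter_pair[OF subgroup_A subgroup_B] .
  have "card (A \<inter> B) dvd card A" "card (A \<inter> B) dvd card B"
    using card_dvd_of_subgroup_subset[OF _ AB] subgroup_A subgroup_B by auto
  then have "card (A \<inter> B) = 1" using coprime_card by (metis coprime_common_divisor_nat)
  then show ?thesis using subgroup.one_closed[OF AB] by (metis card_1_singletonE singletonD)
qed

lemma commute: assumes "a \<in> A" "b \<in> B" shows "a \<otimes> b = b \<otimes> a"
proof -
  have a: "a \<in> carrier K" and b: "b \<in> carrier K" using assms A_subset B_subset by auto
  define c where "c = a \<otimes> b \<otimes> inv a \<otimes> inv b"
  have "c = a \<otimes> (b \<otimes> inv a \<otimes> inv b)" unfolding c_def using a b by (simp add: m_assoc)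
  then have "c \<in> A"
    using normal_A assms(1) b by (simp add: normal_inv_iff subgroup.m_closed subgroup.m_inv_closed)
  moreover have "c \<in> B" unfolding c_def
    using normal_B assms(2) a by (simp add: normal_inv_iff subgroup.m_closed subgroup.m_inv_closed)
  ultimately have "c = \<one>" using inter_eq_one by blast
  then have "c \<otimes> b \<otimes> a = b \<otimes> a" using a b by simp
  then show ?thesis unfolding c_def using a b by (simp add: m_assoc)
qed

lemma card_set_mult: "card (A <#> B) = card A * card B"
  using card_set_mult_normal[OF normal_A subgroup_B] inter_eq_one by simp

lemma set_mult_eq_image: "A <#> B = (\<lambda>(a, b). a \<otimes> b) ` (A \<times> B)"
  unfolding set_mult_def by auto

lemma factor_unique:
  assumes "a \<in> A" "b \<in> B" "a' \<in> A" "b' \<in> B" "a \<otimes> b = a' \<otimes> b'"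
  shows "a = a'" "b = b'"
proof -
  have "inj_on (\<lambda>(a, b). a \<otimes> b) (A \<times> B)"
    using card_set_mult finite_A finite_B
    by (intro eq_card_imp_inj_on) (auto simp: set_mult_eq_image card_cartesian_product)
  then have "(a, b) = (a', b')" by (rule inj_onD) (use assms in auto)
  then show "a = a'" "b = b'" by auto
qed

lemma mult_interchange:
  assumes "a \<in> A" "a' \<in> A" "b \<in> B" "b' \<in> B"
  shows "(a \<otimes> a') \<otimes> (b \<otimes> b') = (a \<otimes> b) \<otimes> (a' \<otimes> b')"
proof -
  have c: "a \<in> carrier K" "a' \<in> carrier K" "b \<in> carrier K" "b' \<in> carrier K"
    using assms A_subset B_subset by auto
  have "(a \<otimes> a') \<otimes> (b \<otimes> b') = a \<otimes> (a' \<otimes> b) \<otimes> b'" using c by (simp add: m_assoc)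
  also have "\<dots> = a \<otimes> (b \<otimes> a') \<otimes> b'" using commute[OF assms(2,3)] by simp
  also have "\<dots> = (a \<otimes> b) \<otimes> (a' \<otimes> b')" using c by (simp add: m_assoc)
  finally show ?thesis .
qed

end

text \<open>The A-component of k when K is the internal direct product of A and B (unspecified otherwise).\<close>
definition dprod_proj :: "('a, 'c) monoid_scheme \<Rightarrow> 'a set \<Rightarrow> 'a set \<Rightarrow> 'a \<Rightarrow> 'a" where
  "dprod_proj K A B k = (THE a. a \<in> A \<and> (\<exists>b\<in>B. k = a \<otimes>\<^bsub>K\<^esub> b))"

locale coprime_dprod = coprime_normal_subgroups +
  assumes card_carrier: "card A * card B = order K"
begin

abbreviation "proj1 \<equiv> dprod_proj K A B"
abbreviation "proj2 \<equiv> dprod_proj K B A"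

lemma swap: "coprime_dprod K B A"
  using coprime_normal_subgroups.swap[OF coprime_normal_subgroups_axioms] card_carrier
  unfolding coprime_dprod_def coprime_dprod_axioms_def by (simp add: mult.commute)

lemma set_mult_eq_carrier: "A <#> B = carrier K"
  using card_subset_eq[OF finite_carrier] card_set_mult card_carrier
    setmult_subset_G[OF A_subset B_subset] by (simp add: order_def)

lemma proj_factor:
  assumes "a \<in> A" "b \<in> B"
  shows "proj1 (a \<otimes> b) = a" and "proj2 (a \<otimes> b) = b"
proof -
  show "proj1 (a \<otimes> b) = a" unfolding dprod_proj_def
  proof (rule the_equality)
    fix a' assume "a' \<in> A \<and> (\<exists>b'\<in>B. a \<otimes> b = a' \<otimes> b')"
    then show "a' = a" using factor_unique(1) assms by metis
  qed (use assms in blast)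
  show "proj2 (a \<otimes> b) = b" unfolding dprod_proj_def
  proof (rule the_equality)
    fix b' assume "b' \<in> B \<and> (\<exists>a'\<in>A. a \<otimes> b = b' \<otimes> a')"
    then obtain a' where "a' \<in> A" "b' \<in> B" "a \<otimes> b = a' \<otimes> b'" using commute by metis
    then show "b' = b" using factor_unique(2) assms by metis
  qed (use assms commute in blast)
qed

lemma proj_closed:
  assumes "k \<in> carrier K"
  shows "proj1 k \<in> A" "proj2 k \<in> B" "proj1 k \<otimes> proj2 k = k"
proof -
  have "k \<in> (\<lambda>(a, b). a \<otimes> b) ` (A \<times> B)"
    using assms set_mult_eq_carrier set_mult_eq_image by simp
  then obtain a b where "a \<in> A" "b \<in> B" "k = a \<otimes> b" by auto
  then show "proj1 k \<in> A" "proj2 k \<in> B" "proj1 k \<otimes> proj2 k = k" using proj_factor by auto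
qed

lemma proj_carrier: "k \<in> carrier K \<Longrightarrow> proj1 k \<in> carrier K"  "k \<in> carrier K \<Longrightarrow> proj2 k \<in> carrier K"
  using proj_closed A_subset B_subset by auto

lemma proj_A: "a \<in> A \<Longrightarrow> proj1 a = a" "a \<in> A \<Longrightarrow> proj2 a = \<one>"
  using proj_factor[of a \<one>] subgroup.one_closed[OF subgroup_B] A_subset by auto

lemma proj_B: "b \<in> B \<Longrightarrow> proj1 b = \<one>" "b \<in> B \<Longrightarrow> proj2 b = b"
  using proj_factor[of \<one> b] subgroup.one_closed[OF subgroup_A] B_subset by auto

lemma proj_mult:
  assumes "x \<in> carrier K" "y \<in> carrier K"
  shows "proj1 (x \<otimes> y) = proj1 x \<otimes> proj1 y" "proj2 (x \<otimes> y) = proj2 x \<otimes> proj2 y"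
proof -
  note x = proj_closed[OF assms(1)] and y = proj_closed[OF assms(2)]
  have "x \<otimes> y = (proj1 x \<otimes> proj1 y) \<otimes> (proj2 x \<otimes> proj2 y)"
    using mult_interchange[OF x(1) y(1) x(2) y(2)] x(3) y(3) by simp
  moreover have "proj1 x \<otimes> proj1 y \<in> A" "proj2 x \<otimes> proj2 y \<in> B"
    using x y subgroup.m_closed subgroup_A subgroup_B by metis+
  ultimately show "proj1 (x \<otimes> y) = proj1 x \<otimes> proj1 y" "proj2 (x \<otimes> y) = proj2 x \<otimes> proj2 y"
    using proj_factor by auto
qed

lemma proj_pow: "x \<in> carrier K \<Longrightarrow> proj1 (x [^] (n::nat)) = proj1 x [^] n"
  by (induction n)
    (simp_all add: proj_A(1)[OF subgroup.one_closed[OF subgroup_A]] proj_mult proj_carrier)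

lemma mem_A_iff: "x \<in> A \<longleftrightarrow> x \<in> carrier K \<and> proj2 x = \<one>"
proof
  assume "x \<in> carrier K \<and> proj2 x = \<one>"
  then have "x = proj1 x" using proj_closed(3)[of x] proj_carrier(1)[of x] by simp
  then show "x \<in> A" using proj_closed(1) \<open>x \<in> carrier K \<and> proj2 x = \<one>\<close> by metis
qed (use proj_A(2) A_subset in auto)

lemma B_eq_pow_card: "B = {x \<in> carrier K. x [^] card B = \<one>}"
proof (intro equalityI subsetI)
  fix x assume "x \<in> B"
  then show "x \<in> {x \<in> carrier K. x [^] card B = \<one>}"
    using pow_card_subgroup_eq_one[OF subgroup_B finite_B] B_subset by auto
next
  fix x assume x: "x \<in> {x \<in> carrier K. x [^] card B = \<one>}"
  then have "proj1 x [^] card B = \<one>"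
    using proj_pow[of x "card B"] proj_A(1)[OF subgroup.one_closed[OF subgroup_A]] by auto
  moreover have "proj1 x [^] card A = \<one>"
    using x pow_card_subgroup_eq_one[OF subgroup_A finite_A] proj_closed by auto
  ultimately have "proj1 x = \<one>"
    using x coprime_card proj_carrier(1) eq_one_if_pow_coprime_eq_one by (simp add: coprime_commute)
  then have "x = proj2 x" using x proj_closed(3)[of x] proj_carrier(2)[of x] by simp
  then show "x \<in> B" using x proj_closed(2)[of x] by simp
qed

end

lemma (in coprime_normal_subgroups) coprime_dprod_set_mult:
  "coprime_dprod (K\<lparr>carrier := A <#> B\<rparr>) A B"
proof -
  have AB: "subgroup (A <#> B) K" using mult_norm_subgroup[OF normal_A subgroup_B] .
  have "B \<subseteq> A <#> B"
    using subgroup.subset[OF subgroup_of_normal_set_mult[OF normal_A subgroup_B]] by simp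
  then have "B \<lhd> K\<lparr>carrier := A <#> B\<rparr>" using normal_restrict_supergroup[OF AB normal_B] by blast
  moreover have "A \<lhd> K\<lparr>carrier := A <#> B\<rparr>"
    using normal_in_normal_set_mult[OF normal_A subgroup_B] .
  moreover have "finite (A <#> B)" using finite_subset[OF subgroup.subset[OF AB] finite_carrier] .
  ultimately show ?thesis
    using subgroup_imp_group[OF AB] coprime_card card_set_mult
    by (simp add: coprime_dprod_def coprime_normal_subgroups_def coprime_normal_subgroups_axioms_def
        coprime_dprod_axioms_def order_def)
qed

section \<open>Holomorphs and regular embeddings\<close>

lemma holomorphE:
  assumes "f \<in> holomorph G"
  obtains \<alpha> g where "\<alpha> \<in> auto G" "g \<in> carrier G" "f = (\<lambda>x \<in> carrier G. \<alpha> x \<otimes>\<^bsub>G\<^esub> inv\<^bsub>G\<^esub> g)"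
  using assms unfolding holomorph_def by blast

lemma auto_imp_hom: "\<alpha> \<in> auto G \<Longrightarrow> \<alpha> \<in> hom G G"
  by (simp add: auto_def)

lemma auto_imp_bij_betw: "\<alpha> \<in> auto G \<Longrightarrow> bij_betw \<alpha> (carrier G) (carrier G)"
  by (simp add: auto_def Bij_def)

lemma auto_update_carrierD:
  assumes "\<alpha> \<in> auto (G\<lparr>carrier := H\<rparr>)"
  shows "x \<in> H \<Longrightarrow> \<alpha> x \<in> H" "x \<in> H \<Longrightarrow> y \<in> H \<Longrightarrow> \<alpha> (x \<otimes>\<^bsub>G\<^esub> y) = \<alpha> x \<otimes>\<^bsub>G\<^esub> \<alpha> y"
    "inj_on \<alpha> H"
  using hom_in_carrier[OF auto_imp_hom[OF assms]] hom_mult[OF auto_imp_hom[OF assms]]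
    bij_betw_imp_inj_on[OF auto_imp_bij_betw[OF assms]] by auto

lemma (in group) holomorph_imp_Bij:
  assumes "f \<in> holomorph G" shows "f \<in> Bij (carrier G)"
proof -
  obtain \<alpha> g where \<alpha>: "\<alpha> \<in> auto G" and g: "g \<in> carrier G" and f: "f = (\<lambda>x \<in> carrier G. \<alpha> x \<otimes> inv g)"
    using holomorphE[OF assms] .
  have "bij_betw (\<lambda>x. x \<otimes> inv g) (carrier G) (carrier G)"
    using g by (intro bij_betwI[where g = "\<lambda>x. x \<otimes> g"]) (auto simp: m_assoc)
  then have "bij_betw ((\<lambda>x. x \<otimes> inv g) \<circ> \<alpha>) (carrier G) (carrier G)"
    using auto_imp_bij_betw[OF \<alpha>] bij_betw_trans by blast
  moreover have
    "bij_betw f (carrier G) (carrier G) = bij_betw ((\<lambda>x. x \<otimes> inv g) \<circ> \<alpha>) (carrier G) (carrier G)"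
    by (rule bij_betw_cong) (simp add: f)
  ultimately show ?thesis by (simp add: Bij_def f)
qed

lemma (in group) holomorph_subgroupE:
  assumes "f \<in> holomorph (G\<lparr>carrier := H\<rparr>)" "subgroup H G"
  obtains \<alpha> g where "\<alpha> \<in> auto (G\<lparr>carrier := H\<rparr>)" "g \<in> H" "f = (\<lambda>x\<in>H. \<alpha> x \<otimes> inv g)"
proof -
  obtain \<alpha> g where "\<alpha> \<in> auto (G\<lparr>carrier := H\<rparr>)" "g \<in> H"
      "f = (\<lambda>x\<in>H. \<alpha> x \<otimes> inv\<^bsub>G\<lparr>carrier := H\<rparr>\<^esub> g)"
    using holomorphE[OF assms(1)] by auto
  then show ?thesis using that m_inv_consistent[OF assms(2)] by simp
qed

lemma (in group) id_in_holomorph: "(\<lambda>x\<in>carrier G. x) \<in> holomorph G"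
  unfolding holomorph_def using id_in_auto
  by (intro CollectI bexI[of _ "\<lambda>x\<in>carrier G. x"] bexI[of _ \<one>]) (auto simp: fun_eq_iff)

lemma regular_embeddingsD:
  assumes "\<beta> \<in> regular_embeddings K G"
  shows "\<beta> \<in> extensional (carrier K)" "\<beta> \<in> hom K (BijGroup (carrier G))"
    "\<And>k. k \<in> carrier K \<Longrightarrow> \<beta> k \<in> holomorph G"
    "\<And>x y. x \<in> carrier G \<Longrightarrow> y \<in> carrier G \<Longrightarrow> \<exists>!k. k \<in> carrier K \<and> \<beta> k x = y"
  using assms by (simp_all add: regular_embeddings_def image_subset_iff)

lemma regular_embedding_group_action:
  fixes K :: "('a, 'c) monoid_scheme" and G :: "('b, 'd) monoid_scheme"
  assumes "group K" "\<beta> \<in> regular_embeddings K G"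
  shows "group_action K (carrier G) \<beta>"
  using assms group_BijGroup regular_embeddingsD(2)[OF assms(2)]
  by (simp add: group_action_def group_hom_def group_hom_axioms_def)

lemma regular_imp_inj_on:
  assumes "\<forall>x\<in>E. \<forall>y\<in>E. \<exists>!k. k \<in> S \<and> \<beta> k x = y" "E \<noteq> {}"
    "\<And>k x. k \<in> S \<Longrightarrow> x \<in> E \<Longrightarrow> \<beta> k x \<in> E"
  shows "inj_on \<beta> S"
proof (rule inj_onI)
  fix k k' assume k: "k \<in> S" "k' \<in> S" "\<beta> k = \<beta> k'"
  obtain x where x: "x \<in> E" using assms(2) by blast
  then have "\<exists>!j. j \<in> S \<and> \<beta> j x = \<beta> k x" using assms(1,3) k(1) by blast
  then show "k = k'" using k by metis
qed

lemma regular_embeddings_eqI: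
  assumes "\<beta> \<in> regular_embeddings K G" "\<beta>' \<in> regular_embeddings K G"
    and "\<And>k x. k \<in> carrier K \<Longrightarrow> x \<in> carrier G \<Longrightarrow> \<beta> k x = \<beta>' k x"
  shows "\<beta> = \<beta>'"
proof
  fix k show "\<beta> k = \<beta>' k"
  proof (cases "k \<in> carrier K")
    case True
    have "\<beta> k \<in> extensional (carrier G)" "\<beta>' k \<in> extensional (carrier G)"
      using hom_in_carrier[OF regular_embeddingsD(2)[OF assms(1)] True]
        hom_in_carrier[OF regular_embeddingsD(2)[OF assms(2)] True]
      by (auto simp: BijGroup_def Bij_def)
    then show ?thesis using assms(3)[OF True] by (auto intro: extensionalityI)
  qed (use regular_embeddingsD(1)[OF assms(1)] regular_embeddingsD(1)[OF assms(2)] in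
    \<open>simp add: extensional_def\<close>)
qed

lemma aut_conj_relE:
  assumes "(\<beta>, \<beta>') \<in> aut_conj_rel K G"
  obtains \<alpha> where "\<beta> \<in> regular_embeddings K G" "\<beta>' \<in> regular_embeddings K G" "\<alpha> \<in> auto G"
    "\<And>k x. k \<in> carrier K \<Longrightarrow> x \<in> carrier G \<Longrightarrow> \<beta>' k (\<alpha> x) = \<alpha> (\<beta> k x)"
  using assms unfolding aut_conj_rel_def by blast

lemma (in group) aut_conj_rel_refl:
  assumes "\<beta> \<in> regular_embeddings K G" shows "(\<beta>, \<beta>) \<in> aut_conj_rel K G"
proof -
  have "\<beta> k x \<in> carrier G" if "k \<in> carrier K" "x \<in> carrier G" for k x
    using hom_in_carrier[OF regular_embeddingsD(2)[OF assms] that(1)] that(2)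
    by (auto simp: BijGroup_def Bij_def bij_betw_def)
  then show ?thesis
    using assms id_in_auto by (auto simp: aut_conj_rel_def intro!: bexI[of _ "\<lambda>x\<in>carrier G. x"])
qed

section \<open>Automorphisms of a coprime direct product\<close>

context coprime_dprod
begin

lemma A_eq_pow_card: "A = {x \<in> carrier K. x [^] card A = \<one>}"
  using coprime_dprod.B_eq_pow_card[OF swap] .

lemma auto_closed:
  assumes "\<alpha> \<in> auto K"
  shows "a \<in> A \<Longrightarrow> \<alpha> a \<in> A" "b \<in> B \<Longrightarrow> \<alpha> b \<in> B"
proof -
  have "\<alpha> x \<in> carrier K \<and> \<alpha> x [^] n = \<one>" if "x \<in> carrier K" "x [^] (n::nat) = \<one>" for x n
    using that hom_nat_pow[OF auto_imp_hom[OF assms] _ is_group is_group]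
      hom_one[OF auto_imp_hom[OF assms] is_group is_group] hom_in_carrier[OF auto_imp_hom[OF assms]]
    by metis
  then show "a \<in> A \<Longrightarrow> \<alpha> a \<in> A" "b \<in> B \<Longrightarrow> \<alpha> b \<in> B"
    using A_eq_pow_card B_eq_pow_card by blast+
qed

lemma proj_auto:
  assumes "\<alpha> \<in> auto K" "x \<in> carrier K"
  shows "proj1 (\<alpha> x) = \<alpha> (proj1 x)" "proj2 (\<alpha> x) = \<alpha> (proj2 x)"
proof -
  have "\<alpha> x = \<alpha> (proj1 x) \<otimes> \<alpha> (proj2 x)"
    using hom_mult[OF auto_imp_hom[OF assms(1)] proj_carrier[OF assms(2)]]
      proj_closed(3)[OF assms(2)] by simp
  then show "proj1 (\<alpha> x) = \<alpha> (proj1 x)" "proj2 (\<alpha> x) = \<alpha> (proj2 x)"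
    using proj_factor auto_closed[OF assms(1)] proj_closed[OF assms(2)] by auto
qed

lemma proj_holomorph:
  assumes "f \<in> holomorph K" "x \<in> carrier K"
  shows "proj1 (f x) = proj1 (f (proj1 x))"
proof -
  obtain \<alpha> g where \<alpha>: "\<alpha> \<in> auto K" and g: "g \<in> carrier K" and f: "f = (\<lambda>x \<in> carrier K. \<alpha> x \<otimes> inv g)"
    using holomorphE[OF assms(1)] .
  have \<alpha>c: "\<And>y. y \<in> carrier K \<Longrightarrow> \<alpha> y \<in> carrier K" using hom_in_carrier[OF auto_imp_hom[OF \<alpha>]] .
  have px: "proj1 x \<in> carrier K" "proj1 x \<in> A" using proj_carrier(1) proj_closed(1) assms(2) by auto
  have "proj1 (f x) = proj1 (\<alpha> x) \<otimes> proj1 (inv g)"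
    using f assms(2) proj_mult(1)[OF \<alpha>c[OF assms(2)]] g by simp
  also have "\<dots> = \<alpha> (proj1 x) \<otimes> proj1 (inv g)" using proj_auto(1)[OF \<alpha> assms(2)] by simp
  also have "\<dots> = proj1 (\<alpha> (proj1 x)) \<otimes> proj1 (inv g)"
    using proj_auto(1)[OF \<alpha> px(1)] proj_A(1)[OF px(2)] by simp
  also have "\<dots> = proj1 (f (proj1 x))"
    using f px(1) proj_mult(1)[OF \<alpha>c[OF px(1)]] g by simp
  finally show ?thesis .
qed

lemma auto_restrict:
  assumes "\<alpha> \<in> auto K"
  shows "(\<lambda>x\<in>A. \<alpha> x) \<in> auto (K\<lparr>carrier := A\<rparr>)"
proof -
  have "inj_on \<alpha> A"
    using inj_on_subset[OF bij_betw_imp_inj_on[OF auto_imp_bij_betw[OF assms]] A_subset] .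
  moreover have "\<alpha> ` A \<subseteq> A" using auto_closed(1)[OF assms] by blast
  ultimately have "bij_betw \<alpha> A A" using endo_inj_surj[OF finite_A] by (simp add: bij_betw_def)
  then have "bij_betw (\<lambda>x\<in>A. \<alpha> x) A A" using bij_betw_cong[of A "\<lambda>x\<in>A. \<alpha> x" \<alpha>] by simp
  moreover have "\<alpha> (x \<otimes> y) = \<alpha> x \<otimes> \<alpha> y" if "x \<in> A" "y \<in> A" for x y
    using hom_mult[OF auto_imp_hom[OF assms]] that A_subset by auto
  then have "(\<lambda>x\<in>A. \<alpha> x) \<in> hom (K\<lparr>carrier := A\<rparr>) (K\<lparr>carrier := A\<rparr>)"
    using auto_closed(1)[OF assms] subgroup.m_closed[OF subgroup_A] by (simp add: hom_def)
  ultimately show ?thesis by (simp add: auto_def Bij_def)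
qed

end

definition dprod_map
  :: "('a, 'c) monoid_scheme \<Rightarrow> 'a set \<Rightarrow> 'a set \<Rightarrow> ('a \<Rightarrow> 'a) \<Rightarrow> ('a \<Rightarrow> 'a) \<Rightarrow> 'a \<Rightarrow> 'a" where
  "dprod_map K A B \<alpha>1 \<alpha>2 = (\<lambda>x\<in>carrier K. \<alpha>1 (dprod_proj K A B x) \<otimes>\<^bsub>K\<^esub> \<alpha>2 (dprod_proj K B A x))"

context coprime_dprod
begin

context
  fixes \<alpha>1 \<alpha>2
  assumes \<alpha>1: "\<alpha>1 \<in> auto (K\<lparr>carrier := A\<rparr>)" and \<alpha>2: "\<alpha>2 \<in> auto (K\<lparr>carrier := B\<rparr>)"
begin

lemma dprod_map_components:
  assumes "x \<in> carrier K"
  shows "\<alpha>1 (proj1 x) \<in> A" "\<alpha>2 (proj2 x) \<in> B"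
  using auto_update_carrierD(1)[OF \<alpha>1] auto_update_carrierD(1)[OF \<alpha>2] proj_closed assms by auto

lemma proj_dprod_map:
  assumes "x \<in> carrier K"
  shows "proj1 (dprod_map K A B \<alpha>1 \<alpha>2 x) = \<alpha>1 (proj1 x)"
    "proj2 (dprod_map K A B \<alpha>1 \<alpha>2 x) = \<alpha>2 (proj2 x)"
  using proj_factor[OF dprod_map_components[OF assms]] assms by (simp_all add: dprod_map_def)

lemma dprod_map_apply:
  "x \<in> carrier K \<Longrightarrow> dprod_map K A B \<alpha>1 \<alpha>2 x = \<alpha>1 (proj1 x) \<otimes> \<alpha>2 (proj2 x)"
  by (simp add: dprod_map_def)

lemma dprod_map_auto: "dprod_map K A B \<alpha>1 \<alpha>2 \<in> auto K"
proof -
  let ?f = "dprod_map K A B \<alpha>1 \<alpha>2"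
  have closed: "?f x \<in> carrier K" if "x \<in> carrier K" for x
    using dprod_map_components[OF that] A_subset B_subset that dprod_map_apply by auto
  have "?f (x \<otimes> y) = ?f x \<otimes> ?f y" if xy: "x \<in> carrier K" "y \<in> carrier K" for x y
  proof -
    have "?f (x \<otimes> y) = (\<alpha>1 (proj1 x) \<otimes> \<alpha>1 (proj1 y)) \<otimes> (\<alpha>2 (proj2 x) \<otimes> \<alpha>2 (proj2 y))"
      using dprod_map_apply[OF m_closed[OF xy]] proj_mult[OF xy] proj_closed xy
        auto_update_carrierD(2)[OF \<alpha>1] auto_update_carrierD(2)[OF \<alpha>2] by simp
    also have "\<dots> = ?f x \<otimes> ?f y"
      using mult_interchange[OF dprod_map_components(1)[OF xy(1)] dprod_map_components(1)[OF xy(2)]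
        dprod_map_components(2)[OF xy(1)]
          dprod_map_components(2)[OF xy(2)]] xy dprod_map_apply by simp
    finally show ?thesis .
  qed
  then have hom: "?f \<in> hom K K" using closed by (intro homI)
  have "inj_on ?f (carrier K)"
  proof (rule inj_onI)
    fix x y assume xy: "x \<in> carrier K" "y \<in> carrier K" "?f x = ?f y"
    then have "\<alpha>1 (proj1 x) = \<alpha>1 (proj1 y)" "\<alpha>2 (proj2 x) = \<alpha>2 (proj2 y)"
      using proj_dprod_map[OF xy(1)] proj_dprod_map[OF xy(2)] by simp_all
    then have "proj1 x = proj1 y" "proj2 x = proj2 y"
      using inj_onD[OF auto_update_carrierD(3)[OF \<alpha>1]] inj_onD[OF auto_update_carrierD(3)[OF \<alpha>2]]
        proj_closed(1,2)[OF xy(1)] proj_closed(1,2)[OF xy(2)] by blast+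
    then show "x = y" using proj_closed(3)[OF xy(1)] proj_closed(3)[OF xy(2)] by metis
  qed
  moreover have "?f ` carrier K \<subseteq> carrier K" using closed by blast
  ultimately have "bij_betw ?f (carrier K) (carrier K)"
    using endo_inj_surj[OF finite_carrier] by (simp add: bij_betw_def)
  then show ?thesis using hom by (simp add: auto_def Bij_def dprod_map_def)
qed

end

end

section \<open>Regular embeddings of a coprime direct product\<close>

locale coprime_dprod_pair =
  K: coprime_dprod K A B + G: coprime_dprod G C D
  for K :: "('a, 'c) monoid_scheme" and A B and G :: "('b, 'd) monoid_scheme" and C D +
  assumes card_A_C: "card A = card C" and card_B_D: "card B = card D"

lemma (in coprime_dprod_pair) swap: "coprime_dprod_pair K B A G D C"
  using K.swap G.swap card_A_C card_B_D
  unfolding coprime_dprod_pair_def coprime_dprod_pair_axioms_def by simp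

locale dprod_regular_embedding = coprime_dprod_pair +
  fixes \<beta> assumes regular_embedding: "\<beta> \<in> regular_embeddings K G"
begin

lemma swap: "dprod_regular_embedding K B A G D C \<beta>"
  using swap regular_embedding
    unfolding dprod_regular_embedding_def dprod_regular_embedding_axioms_def by simp

sublocale \<beta>: group_action K "carrier G" \<beta>
  using regular_embedding_group_action[OF K.is_group regular_embedding] .

lemma apply_carrier: "k \<in> carrier K \<Longrightarrow> x \<in> carrier G \<Longrightarrow> \<beta> k x \<in> carrier G"
  using \<beta>.element_image by blast

lemma apply_mult: "k \<in> carrier K \<Longrightarrow> k' \<in> carrier K \<Longrightarrow> x \<in> carrier G \<Longrightarrow> \<beta> (k \<otimes>\<^bsub>K\<^esub> k') x = \<beta> k (\<beta> k' x)"
  using \<beta>.composition_rule by blast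

lemma apply_one: "x \<in> carrier G \<Longrightarrow> \<beta> \<one>\<^bsub>K\<^esub> x = x"
  using \<beta>.id_eq_one by (metis restrict_apply')

lemma apply_regular: "x \<in> carrier G \<Longrightarrow> y \<in> carrier G \<Longrightarrow> \<exists>!k. k \<in> carrier K \<and> \<beta> k x = y"
  using regular_embeddingsD(4)[OF regular_embedding] .

lemma apply_eq_imp_eq:
  assumes "k \<in> carrier K" "k' \<in> carrier K" "x \<in> carrier G" "\<beta> k x = \<beta> k' x"
  shows "k = k'"
  using apply_regular[OF assms(3) apply_carrier[OF assms(1,3)]] assms by metis

lemma proj_apply_mult_one:
  assumes "k \<in> carrier K" "k' \<in> carrier K"
  shows "G.proj1 (\<beta> (k \<otimes>\<^bsub>K\<^esub> k') \<one>\<^bsub>G\<^esub>) = G.proj1 (\<beta> k (G.proj1 (\<beta> k' \<one>\<^bsub>G\<^esub>)))"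
  using G.proj_holomorph[OF regular_embeddingsD(3)[OF regular_embedding assms(1)] apply_carrier[OF assms(2) G.one_closed]]
    apply_mult[OF assms G.one_closed] by simp

text \<open>The stabiliser of the C-component of the identity is a subgroup of K of order
  card B = card D; since the elements of B are exactly those killed by card B, it is B.\<close>
lemma proj1_apply_B_one:
  assumes "b \<in> B" shows "G.proj1 (\<beta> b \<one>\<^bsub>G\<^esub>) = \<one>\<^bsub>G\<^esub>"
proof -
  define S where "S = {k \<in> carrier K. G.proj1 (\<beta> k \<one>\<^bsub>G\<^esub>) = \<one>\<^bsub>G\<^esub>}"
  have proj1_one: "G.proj1 \<one>\<^bsub>G\<^esub> = \<one>\<^bsub>G\<^esub>" using G.proj_A(1)[OF subgroup.one_closed[OF G.subgroup_A]] .
  have S: "subgroup S K"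
  proof (rule K.subgroupI)
    show "S \<subseteq> carrier K" "S \<noteq> {}" using apply_one proj1_one unfolding S_def by auto
  next
    fix k assume "k \<in> S"
    then have "G.proj1 (\<beta> (inv\<^bsub>K\<^esub> k \<otimes>\<^bsub>K\<^esub> k) \<one>\<^bsub>G\<^esub>) = G.proj1 (\<beta> (inv\<^bsub>K\<^esub> k) \<one>\<^bsub>G\<^esub>)"
      using proj_apply_mult_one[of "inv\<^bsub>K\<^esub> k" k] unfolding S_def by simp
    then show "inv\<^bsub>K\<^esub> k \<in> S" using \<open>k \<in> S\<close> apply_one proj1_one unfolding S_def by simp
  next
    fix k k' assume "k \<in> S" "k' \<in> S"
    then show "k \<otimes>\<^bsub>K\<^esub> k' \<in> S" using proj_apply_mult_one[of k k'] unfolding S_def by simp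
  qed
  have "bij_betw (\<lambda>k. \<beta> k \<one>\<^bsub>G\<^esub>) S D"
  proof (rule bij_betw_imageI)
    show "inj_on (\<lambda>k. \<beta> k \<one>\<^bsub>G\<^esub>) S"
      by (rule inj_onI) (use apply_eq_imp_eq G.one_closed in \<open>auto simp: S_def\<close>)
    have D: "D = {y \<in> carrier G. G.proj1 y = \<one>\<^bsub>G\<^esub>}" using coprime_dprod.mem_A_iff[OF G.swap]
      by blast
    show "(\<lambda>k. \<beta> k \<one>\<^bsub>G\<^esub>) ` S = D"
    proof (intro equalityI subsetI)
      fix y assume "y \<in> D"
      then have y: "y \<in> carrier G" "G.proj1 y = \<one>\<^bsub>G\<^esub>" using D by auto
      then obtain k where "k \<in> carrier K" "\<beta> k \<one>\<^bsub>G\<^esub> = y" using apply_regular[OF G.one_closed y(1)]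
        by blast
      then show "y \<in> (\<lambda>k. \<beta> k \<one>\<^bsub>G\<^esub>) ` S" using y unfolding S_def by blast
    qed (use D apply_carrier G.one_closed S_def in auto)
  qed
  then have "card S = card B" using card_B_D bij_betw_same_card by metis
  moreover have "S \<subseteq> B"
    using K.B_eq_pow_card K.pow_card_subgroup_eq_one[OF S] finite_subset[OF _ K.finite_carrier] S
      subgroup.subset calculation by fastforce
  ultimately have "S = B" using K.finite_B card_subset_eq by blast
  then show ?thesis using assms unfolding S_def by blast
qed

text \<open>Choose k with \<open>\<beta> k \<one> = proj1 x\<close>; conjugating b by k reduces the claim to the case x = 1.\<close>
lemma proj1_apply_B:
  assumes "b \<in> B" "x \<in> carrier G"
  shows "G.proj1 (\<beta> b x) = G.proj1 x"
proof -
  have b: "b \<in> carrier K" using K.B_subset assms(1) by blast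
  obtain k where k: "k \<in> carrier K" "\<beta> k \<one>\<^bsub>G\<^esub> = G.proj1 x"
    using apply_regular[OF G.one_closed G.proj_carrier(1)[OF assms(2)]] by blast
  define b' where "b' = inv\<^bsub>K\<^esub> k \<otimes>\<^bsub>K\<^esub> b \<otimes>\<^bsub>K\<^esub> k"
  have b': "b' \<in> B" "b' \<in> carrier K"
    using normal.inv_op_closed1[OF K.normal_B k(1) assms(1)] K.B_subset unfolding b'_def by auto
  have bk: "b \<otimes>\<^bsub>K\<^esub> k = k \<otimes>\<^bsub>K\<^esub> b'"
    unfolding b'_def using k(1) b by (simp add: K.m_assoc[symmetric])
  have "G.proj1 (\<beta> b x) = G.proj1 (\<beta> (b \<otimes>\<^bsub>K\<^esub> k) \<one>\<^bsub>G\<^esub>)"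
    using G.proj_holomorph[OF regular_embeddingsD(3)[OF regular_embedding b] assms(2)]
      apply_mult[OF b k(1) G.one_closed] k(2) by simp
  also have "\<dots> = G.proj1 (\<beta> k (G.proj1 (\<beta> b' \<one>\<^bsub>G\<^esub>)))"
    using proj_apply_mult_one[OF k(1) b'(2)] bk by simp
  also have "\<dots> = G.proj1 x"
    using proj1_apply_B_one[OF b'(1)] k G.proj_A(1) G.proj_closed(1)[OF assms(2)] by simp
  finally show ?thesis .
qed

lemma apply_A_closed:
  assumes "a \<in> A" "c \<in> C"
  shows "\<beta> a c \<in> C"
proof -
  have "G.proj2 (\<beta> a c) = G.proj2 c"
    using dprod_regular_embedding.proj1_apply_B[OF swap] assms K.A_subset G.A_subset by blast
  then show ?thesis
    using assms G.mem_A_iff apply_carrier K.A_subset by auto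
qed

lemma apply_decompose:
  assumes "k \<in> carrier K" "x \<in> carrier G"
  shows "\<beta> k x = \<beta> (K.proj1 k) (G.proj1 x) \<otimes>\<^bsub>G\<^esub> \<beta> (K.proj2 k) (G.proj2 x)"
proof -
  let ?a = "K.proj1 k" and ?b = "K.proj2 k" and ?c = "G.proj1 x" and ?d = "G.proj2 x"
  have ab: "?a \<in> A" "?b \<in> B" "?a \<in> carrier K" "?b \<in> carrier K"
    using K.proj_closed K.proj_carrier assms(1) by auto
  have cd: "?c \<in> C" "?d \<in> D" using G.proj_closed assms(2) by auto
  have y: "\<beta> ?b x \<in> carrier G" using apply_carrier[OF ab(4) assms(2)] .
  have \<beta>bd: "\<beta> ?b ?d \<in> D" using dprod_regular_embedding.apply_A_closed[OF swap ab(2) cd(2)] .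
  have "\<beta> k x = \<beta> ?a (\<beta> ?b x)" using apply_mult[OF ab(3,4) assms(2)] K.proj_closed(3)[OF assms(1)]
    by simp
  moreover have "G.proj1 (\<beta> ?a (\<beta> ?b x)) = \<beta> ?a ?c"
    using G.proj_holomorph[OF regular_embeddingsD(3)[OF regular_embedding ab(3)] y]
      proj1_apply_B[OF ab(2) assms(2)] G.proj_A(1)[OF apply_A_closed[OF ab(1) cd(1)]] by simp
  moreover have "G.proj2 (\<beta> ?a (\<beta> ?b x)) = \<beta> ?b ?d"
    using dprod_regular_embedding.proj1_apply_B[OF swap ab(1) y]
      coprime_dprod.proj_holomorph[OF G.swap regular_embeddingsD(3)[OF regular_embedding ab(4)] assms(2)]
      G.proj_B(2)[OF \<beta>bd] by simp
  ultimately show ?thesis using G.proj_closed(3)[OF apply_carrier[OF ab(3) y]] by simp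
qed

end

definition restrict_embedding :: "'a set \<Rightarrow> 'b set \<Rightarrow> ('a \<Rightarrow> 'b \<Rightarrow> 'b) \<Rightarrow> 'a \<Rightarrow> 'b \<Rightarrow> 'b" where
  "restrict_embedding A C \<beta> = (\<lambda>a\<in>A. \<lambda>x\<in>C. \<beta> a x)"

context dprod_regular_embedding
begin

lemma restrict_apply_Bij:
  assumes "a \<in> A" shows "(\<lambda>x\<in>C. \<beta> a x) \<in> Bij C"
proof -
  have "inj_on (\<beta> a) C"
    using inj_on_subset[OF \<beta>.inj_prop G.A_subset] K.A_subset assms by blast
  moreover have "\<beta> a ` C \<subseteq> C" using apply_A_closed[OF assms] by blast
  ultimately have "bij_betw (\<beta> a) C C" using endo_inj_surj[OF G.finite_A]
    by (simp add: bij_betw_def)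
  then show ?thesis using bij_betw_cong[of C "\<lambda>x\<in>C. \<beta> a x" "\<beta> a"] by (simp add: Bij_def)
qed

lemma restrict_apply_holomorph:
  assumes "a \<in> A" shows "(\<lambda>x\<in>C. \<beta> a x) \<in> holomorph (G\<lparr>carrier := C\<rparr>)"
proof -
  have a: "a \<in> carrier K" using assms K.A_subset by blast
  obtain \<alpha> g where \<alpha>: "\<alpha> \<in> auto G" and g: "g \<in> carrier G"
    and f: "\<beta> a = (\<lambda>x \<in> carrier G. \<alpha> x \<otimes>\<^bsub>G\<^esub> inv\<^bsub>G\<^esub> g)"
    using holomorphE[OF regular_embeddingsD(3)[OF regular_embedding a]] .
  have "\<beta> a \<one>\<^bsub>G\<^esub> = inv\<^bsub>G\<^esub> g" using f hom_one[OF auto_imp_hom[OF \<alpha>] G.is_group G.is_group] g by simp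
  then have "inv\<^bsub>G\<^esub> g \<in> C" using apply_A_closed[OF assms subgroup.one_closed[OF G.subgroup_A]]
    by simp
  then have gC: "g \<in> C" using subgroup.m_inv_closed[OF G.subgroup_A] g by fastforce
  have "(\<lambda>x\<in>C. \<beta> a x) = (\<lambda>x\<in>carrier (G\<lparr>carrier := C\<rparr>).
      (\<lambda>x\<in>C. \<alpha> x) x \<otimes>\<^bsub>G\<lparr>carrier := C\<rparr>\<^esub> inv\<^bsub>G\<lparr>carrier := C\<rparr>\<^esub> g)"
    using f G.m_inv_consistent[OF G.subgroup_A gC] G.A_subset by (auto simp: fun_eq_iff)
  moreover have "g \<in> carrier (G\<lparr>carrier := C\<rparr>)" using gC by simp
  ultimately show ?thesis unfolding holomorph_def using G.auto_restrict[OF \<alpha>] by blast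
qed

text \<open>If \<open>\<beta> k c = c'\<close> with c, c' in C, the decomposition of k shows that its B-part fixes
  the identity, so the A-part of k already maps c to c'.\<close>
lemma restrict_regular:
  assumes "c \<in> C" "c' \<in> C"
  shows "\<exists>!a. a \<in> A \<and> \<beta> a c = c'"
proof -
  have c: "c \<in> carrier G" "c' \<in> carrier G" using assms G.A_subset by auto
  obtain k where k: "k \<in> carrier K" "\<beta> k c = c'" using apply_regular[OF c] by blast
  have ab: "K.proj1 k \<in> A" "K.proj2 k \<in> B" using K.proj_closed k(1) by auto
  have "c' \<otimes>\<^bsub>G\<^esub> \<one>\<^bsub>G\<^esub> = \<beta> (K.proj1 k) c \<otimes>\<^bsub>G\<^esub> \<beta> (K.proj2 k) \<one>\<^bsub>G\<^esub>"
    using apply_decompose[OF k(1) c(1)] k(2) G.proj_A[OF assms(1)] c(2) by simp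
  then have "c' = \<beta> (K.proj1 k) c"
    using G.factor_unique(1)[OF assms(2) subgroup.one_closed[OF G.subgroup_B] apply_A_closed[OF ab(1) assms(1)]
      dprod_regular_embedding.apply_A_closed[OF swap ab(2) subgroup.one_closed[OF G.subgroup_B]]] by simp
  then have "K.proj1 k \<in> A \<and> \<beta> (K.proj1 k) c = c'" using ab by simp
  moreover have "a = a'" if "a \<in> A" "a' \<in> A" "\<beta> a c = \<beta> a' c" for a a'
    using apply_eq_imp_eq that K.A_subset c(1) by blast
  ultimately show ?thesis by blast
qed

lemma restrict_embedding_regular:
  "restrict_embedding A C \<beta> \<in> regular_embeddings (K\<lparr>carrier := A\<rparr>) (G\<lparr>carrier := C\<rparr>)"
proof -
  let ?r = "restrict_embedding A C \<beta>"
  have r: "\<And>a. a \<in> A \<Longrightarrow> ?r a = (\<lambda>x\<in>C. \<beta> a x)" unfolding restrict_embedding_def by simp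
  have Bij: "\<And>a. a \<in> A \<Longrightarrow> ?r a \<in> Bij C" using r restrict_apply_Bij by simp
  have "?r (a \<otimes>\<^bsub>K\<^esub> a') = compose C (?r a) (?r a')" if a: "a \<in> A" "a' \<in> A" for a a'
  proof
    fix x
    have "a \<in> carrier K" "a' \<in> carrier K" using a K.A_subset by auto
    then show "?r (a \<otimes>\<^bsub>K\<^esub> a') x = compose C (?r a) (?r a') x"
      using a r subgroup.m_closed[OF K.subgroup_A a] apply_A_closed apply_mult[of a a' x] G.A_subset
      by (auto simp: compose_def)
  qed
  then have "?r \<in> hom (K\<lparr>carrier := A\<rparr>) (BijGroup C)"
    using Bij by (simp add: hom_def BijGroup_def)
  moreover have reg: "\<forall>x\<in>C. \<forall>y\<in>C. \<exists>!a. a \<in> A \<and> ?r a x = y"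
  proof (intro ballI)
    fix x y assume xy: "x \<in> C" "y \<in> C"
    then have "(a \<in> A \<and> ?r a x = y) \<longleftrightarrow> (a \<in> A \<and> \<beta> a x = y)" for a using r by auto
    then show "\<exists>!a. a \<in> A \<and> ?r a x = y" using restrict_regular[OF xy] by simp
  qed
  moreover have "inj_on ?r A"
    using regular_imp_inj_on[OF reg] subgroup.one_closed[OF G.subgroup_A] r apply_A_closed by auto
  ultimately show ?thesis
    using r restrict_apply_holomorph by (auto simp: regular_embeddings_def restrict_embedding_def)
qed

end

definition combine_embeddings ::
  "('a, 'c) monoid_scheme \<Rightarrow> 'a set \<Rightarrow> 'a set \<Rightarrow> ('b, 'd) monoid_scheme \<Rightarrow> 'b set \<Rightarrow> 'b set \<Rightarrow>
     ('a \<Rightarrow> 'b \<Rightarrow> 'b) \<Rightarrow> ('a \<Rightarrow> 'b \<Rightarrow> 'b) \<Rightarrow> 'a \<Rightarrow> 'b \<Rightarrow> 'b" where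
  "combine_embeddings K A B G C D \<beta>1 \<beta>2 = (\<lambda>k\<in>carrier K. \<lambda>x\<in>carrier G.
     \<beta>1 (dprod_proj K A B k) (dprod_proj G C D x)
       \<otimes>\<^bsub>G\<^esub> \<beta>2 (dprod_proj K B A k) (dprod_proj G D C x))"

locale embedding_pair = coprime_dprod_pair +
  fixes \<beta>1 \<beta>2
  assumes regular1: "\<beta>1 \<in> regular_embeddings (K\<lparr>carrier := A\<rparr>) (G\<lparr>carrier := C\<rparr>)"
    and regular2: "\<beta>2 \<in> regular_embeddings (K\<lparr>carrier := B\<rparr>) (G\<lparr>carrier := D\<rparr>)"
begin

abbreviation "\<Psi> \<equiv> combine_embeddings K A B G C D \<beta>1 \<beta>2"

lemma swap: "embedding_pair K B A G D C \<beta>2 \<beta>1"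
  using swap regular1 regular2 unfolding embedding_pair_def embedding_pair_axioms_def by simp

sublocale \<beta>1: group_action "K\<lparr>carrier := A\<rparr>" C \<beta>1
  using regular_embedding_group_action[OF K.subgroup_imp_group[OF K.subgroup_A] regular1] by simp

lemma apply1_closed: "a \<in> A \<Longrightarrow> c \<in> C \<Longrightarrow> \<beta>1 a c \<in> C"
  using \<beta>1.element_image by simp

lemma apply2_closed: "b \<in> B \<Longrightarrow> d \<in> D \<Longrightarrow> \<beta>2 b d \<in> D"
  using embedding_pair.apply1_closed[OF swap] .

lemma apply1_mult: "a \<in> A \<Longrightarrow> a' \<in> A \<Longrightarrow> c \<in> C \<Longrightarrow> \<beta>1 (a \<otimes>\<^bsub>K\<^esub> a') c = \<beta>1 a (\<beta>1 a' c)"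
  using \<beta>1.composition_rule by simp

lemma apply1_one: "c \<in> C \<Longrightarrow> \<beta>1 \<one>\<^bsub>K\<^esub> c = c"
  using fun_cong[OF \<beta>1.id_eq_one, of c] by simp

lemma apply1_eq_imp_eq: "a \<in> A \<Longrightarrow> a' \<in> A \<Longrightarrow> c \<in> C \<Longrightarrow> \<beta>1 a c = \<beta>1 a' c \<Longrightarrow> a = a'"
  using regular_embeddingsD(4)[OF regular1, of c "\<beta>1 a c"] apply1_closed by auto

lemma combine_apply:
  "k \<in> carrier K \<Longrightarrow> x \<in> carrier G \<Longrightarrow>
    \<Psi> k x = \<beta>1 (K.proj1 k) (G.proj1 x) \<otimes>\<^bsub>G\<^esub> \<beta>2 (K.proj2 k) (G.proj2 x)"
  by (simp add: combine_embeddings_def)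

lemma combine_components:
  assumes "k \<in> carrier K" "x \<in> carrier G"
  shows "\<beta>1 (K.proj1 k) (G.proj1 x) \<in> C" "\<beta>2 (K.proj2 k) (G.proj2 x) \<in> D"
  using apply1_closed apply2_closed K.proj_closed[OF assms(1)] G.proj_closed[OF assms(2)] by auto

lemma proj_combine:
  assumes "k \<in> carrier K" "x \<in> carrier G"
  shows "G.proj1 (\<Psi> k x) = \<beta>1 (K.proj1 k) (G.proj1 x)"
    "G.proj2 (\<Psi> k x) = \<beta>2 (K.proj2 k) (G.proj2 x)"
  using G.proj_factor[OF combine_components[OF assms]] combine_apply[OF assms] by simp_all

lemma combine_carrier:
  assumes "k \<in> carrier K" "x \<in> carrier G" shows "\<Psi> k x \<in> carrier G"
  using combine_apply[OF assms] combine_components[OF assms] G.A_subset G.B_subset by auto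

lemma combine_A:
  assumes "a \<in> A" "c \<in> C" shows "\<Psi> a c = \<beta>1 a c"
proof -
  have "\<Psi> a c = \<beta>1 a c \<otimes>\<^bsub>G\<^esub> \<beta>2 \<one>\<^bsub>K\<^esub> \<one>\<^bsub>G\<^esub>"
    using combine_apply[of a c] assms K.A_subset G.A_subset K.proj_A G.proj_A by auto
  then show ?thesis
    using embedding_pair.apply1_one[OF swap subgroup.one_closed[OF G.subgroup_B]]
      apply1_closed[OF assms] G.A_subset by auto
qed

lemma combine_B:
  assumes "b \<in> B" "d \<in> D" shows "\<Psi> b d = \<beta>2 b d"
proof -
  have "\<Psi> b d = \<beta>1 \<one>\<^bsub>K\<^esub> \<one>\<^bsub>G\<^esub> \<otimes>\<^bsub>G\<^esub> \<beta>2 b d"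
    using combine_apply[of b d] assms K.B_subset G.B_subset K.proj_B G.proj_B by auto
  then show ?thesis
    using apply1_one[OF subgroup.one_closed[OF G.subgroup_A]] apply2_closed[OF assms] G.B_subset
      by auto
qed

lemma combine_holomorph:
  assumes k: "k \<in> carrier K" shows "\<Psi> k \<in> holomorph G"
proof -
  obtain \<alpha>1 g1 where \<alpha>1: "\<alpha>1 \<in> auto (G\<lparr>carrier := C\<rparr>)" and g1: "g1 \<in> C"
      and \<beta>1k: "\<beta>1 (K.proj1 k) = (\<lambda>x\<in>C. \<alpha>1 x \<otimes>\<^bsub>G\<^esub> inv\<^bsub>G\<^esub> g1)"
    using G.holomorph_subgroupE[OF regular_embeddingsD(3)[OF regular1] G.subgroup_A]
      K.proj_closed(1)[OF k]
    by auto
  obtain \<alpha>2 g2 where \<alpha>2: "\<alpha>2 \<in> auto (G\<lparr>carrier := D\<rparr>)" and g2: "g2 \<in> D"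
      and \<beta>2k: "\<beta>2 (K.proj2 k) = (\<lambda>x\<in>D. \<alpha>2 x \<otimes>\<^bsub>G\<^esub> inv\<^bsub>G\<^esub> g2)"
    using G.holomorph_subgroupE[OF regular_embeddingsD(3)[OF regular2] G.subgroup_B]
      K.proj_closed(2)[OF k]
    by auto
  let ?\<alpha> = "dprod_map G C D \<alpha>1 \<alpha>2"
  have g: "g1 \<in> carrier G" "g2 \<in> carrier G" using g1 g2 G.A_subset G.B_subset by auto
  have ig: "inv\<^bsub>G\<^esub> g1 \<in> C" "inv\<^bsub>G\<^esub> g2 \<in> D"
    using subgroup.m_inv_closed[OF G.subgroup_A g1] subgroup.m_inv_closed[OF G.subgroup_B g2]
      by auto
  have "\<Psi> k x = ?\<alpha> x \<otimes>\<^bsub>G\<^esub> inv\<^bsub>G\<^esub> (g1 \<otimes>\<^bsub>G\<^esub> g2)" if x: "x \<in> carrier G" for x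
  proof -
    have "\<Psi> k x = (\<alpha>1 (G.proj1 x) \<otimes>\<^bsub>G\<^esub> inv\<^bsub>G\<^esub> g1) \<otimes>\<^bsub>G\<^esub> (\<alpha>2 (G.proj2 x) \<otimes>\<^bsub>G\<^esub> inv\<^bsub>G\<^esub> g2)"
      using combine_apply[OF k x] \<beta>1k \<beta>2k G.proj_closed[OF x] by simp
    also have "\<dots> = ?\<alpha> x \<otimes>\<^bsub>G\<^esub> (inv\<^bsub>G\<^esub> g1 \<otimes>\<^bsub>G\<^esub> inv\<^bsub>G\<^esub> g2)"
      using G.mult_interchange[OF G.dprod_map_components(1)[OF \<alpha>1 \<alpha>2 x] ig(1) G.dprod_map_components(2)[OF \<alpha>1 \<alpha>2 x] ig(2)]
        G.dprod_map_apply[OF \<alpha>1 \<alpha>2 x] by simp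
    also have "\<dots> = ?\<alpha> x \<otimes>\<^bsub>G\<^esub> inv\<^bsub>G\<^esub> (g1 \<otimes>\<^bsub>G\<^esub> g2)"
      using G.commute[OF ig] G.inv_mult_group[OF g] by simp
    finally show ?thesis .
  qed
  then have "\<Psi> k = (\<lambda>x\<in>carrier G. ?\<alpha> x \<otimes>\<^bsub>G\<^esub> inv\<^bsub>G\<^esub> (g1 \<otimes>\<^bsub>G\<^esub> g2))"
    using k by (auto simp: combine_embeddings_def fun_eq_iff)
  then show ?thesis
    unfolding holomorph_def using G.dprod_map_auto[OF \<alpha>1 \<alpha>2] g by blast
qed

lemma combine_regular:
  assumes xy: "x \<in> carrier G" "y \<in> carrier G"
  shows "\<exists>!k. k \<in> carrier K \<and> \<Psi> k x = y"
proof -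
  obtain a where a: "a \<in> A" "\<beta>1 a (G.proj1 x) = G.proj1 y"
    using regular_embeddingsD(4)[OF regular1] G.proj_closed(1) xy by force
  obtain b where b: "b \<in> B" "\<beta>2 b (G.proj2 x) = G.proj2 y"
    using regular_embeddingsD(4)[OF regular2] G.proj_closed(2) xy by force
  have ab: "a \<otimes>\<^bsub>K\<^esub> b \<in> carrier K" using a(1) b(1) K.A_subset K.B_subset by auto
  have "\<Psi> (a \<otimes>\<^bsub>K\<^esub> b) x = y"
    using combine_apply[OF ab xy(1)] K.proj_factor[OF a(1) b(1)] a(2) b(2)
      G.proj_closed(3)[OF xy(2)] by simp
  moreover have "k = a \<otimes>\<^bsub>K\<^esub> b" if k: "k \<in> carrier K" "\<Psi> k x = y" for k
  proof -
    have "\<beta>1 (K.proj1 k) (G.proj1 x) = \<beta>1 a (G.proj1 x)"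
      "\<beta>2 (K.proj2 k) (G.proj2 x) = \<beta>2 b (G.proj2 x)"
      using proj_combine[OF k(1) xy(1)] k(2) a(2) b(2) by simp_all
    then have "K.proj1 k = a" "K.proj2 k = b"
      using apply1_eq_imp_eq embedding_pair.apply1_eq_imp_eq[OF swap] K.proj_closed[OF k(1)]
        G.proj_closed[OF xy(1)]
        a(1) b(1) by blast+
    then show ?thesis using K.proj_closed(3)[OF k(1)] by simp
  qed
  ultimately show ?thesis using ab by blast
qed

lemma combine_regular_embedding: "\<Psi> \<in> regular_embeddings K G"
proof -
  have "\<Psi> (k \<otimes>\<^bsub>K\<^esub> k') = compose (carrier G) (\<Psi> k) (\<Psi> k')"
    if k: "k \<in> carrier K" "k' \<in> carrier K" for k k'
  proof
    fix x show "\<Psi> (k \<otimes>\<^bsub>K\<^esub> k') x = compose (carrier G) (\<Psi> k) (\<Psi> k') x"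
    proof (cases "x \<in> carrier G")
      case True
      have "\<Psi> (k \<otimes>\<^bsub>K\<^esub> k') x
          = \<beta>1 (K.proj1 k \<otimes>\<^bsub>K\<^esub> K.proj1 k') (G.proj1 x)
            \<otimes>\<^bsub>G\<^esub> \<beta>2 (K.proj2 k \<otimes>\<^bsub>K\<^esub> K.proj2 k') (G.proj2 x)"
        using combine_apply[OF K.m_closed[OF k] True] K.proj_mult[OF k] by simp
      also have "\<dots> = \<Psi> k (\<Psi> k' x)"
        using apply1_mult[of "K.proj1 k" "K.proj1 k'" "G.proj1 x"]
          embedding_pair.apply1_mult[OF swap, of "K.proj2 k" "K.proj2 k'" "G.proj2 x"]
          K.proj_closed k G.proj_closed True combine_apply[OF k(1) combine_carrier[OF k(2) True]]
          proj_combine[OF k(2) True] by simp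
      finally show ?thesis using True by (simp add: compose_def)
    qed (simp add: combine_embeddings_def compose_def k)
  qed
  then have "\<Psi> \<in> hom K (BijGroup (carrier G))"
    using G.holomorph_imp_Bij[OF combine_holomorph] by (simp add: hom_def BijGroup_def)
  moreover have reg: "\<forall>x\<in>carrier G. \<forall>y\<in>carrier G. \<exists>!k. k \<in> carrier K \<and> \<Psi> k x = y"
    by (intro ballI combine_regular)
  moreover have "inj_on \<Psi> (carrier K)"
    by (rule regular_imp_inj_on[OF reg]) (use combine_carrier G.one_closed in auto)
  moreover have "\<Psi> \<in> extensional (carrier K)" by (simp add: combine_embeddings_def)
  ultimately show ?thesis by (simp add: regular_embeddings_def image_subset_iff combine_holomorph)
qed

end

lemma (in coprime_dprod_pair) embedding_pairI:
  "\<beta>1 \<in> regular_embeddings (K\<lparr>carrier := A\<rparr>) (G\<lparr>carrier := C\<rparr>) \<Longrightarrow>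
   \<beta>2 \<in> regular_embeddings (K\<lparr>carrier := B\<rparr>) (G\<lparr>carrier := D\<rparr>) \<Longrightarrow> embedding_pair K A B G C D \<beta>1 \<beta>2"
  by (simp add: embedding_pair_def embedding_pair_axioms_def coprime_dprod_pair_axioms)

lemma (in coprime_dprod_pair) dprod_regular_embeddingI:
  "\<beta> \<in> regular_embeddings K G \<Longrightarrow> dprod_regular_embedding K A B G C D \<beta>"
  by (simp add: dprod_regular_embedding_def dprod_regular_embedding_axioms_def
    coprime_dprod_pair_axioms)

lemma (in embedding_pair) restrict_combine:
  "restrict_embedding A C \<Psi> = \<beta>1" "restrict_embedding B D \<Psi> = \<beta>2"
proof -
  interpret \<Psi>: dprod_regular_embedding K A B G C D \<Psi>
    using dprod_regular_embeddingI[OF combine_regular_embedding] .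
  show "restrict_embedding A C \<Psi> = \<beta>1"
    using regular_embeddings_eqI[OF \<Psi>.restrict_embedding_regular regular1] combine_A
    by (simp add: restrict_embedding_def)
  show "restrict_embedding B D \<Psi> = \<beta>2"
    using regular_embeddings_eqI[OF dprod_regular_embedding.restrict_embedding_regular[OF \<Psi>.swap] regular2] combine_B
    by (simp add: restrict_embedding_def)
qed

lemma (in dprod_regular_embedding) combine_restrict:
  "combine_embeddings K A B G C D (restrict_embedding A C \<beta>) (restrict_embedding B D \<beta>) = \<beta>"
proof -
  interpret embedding_pair K A B G C D "restrict_embedding A C \<beta>" "restrict_embedding B D \<beta>"
    using embedding_pairI restrict_embedding_regular
      dprod_regular_embedding.restrict_embedding_regular[OF swap]
    by blast
  show ?thesis
    using regular_embeddings_eqI[OF combine_regular_embedding regular_embedding] apply_decompose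
      combine_apply K.proj_closed G.proj_closed by (simp add: restrict_embedding_def)
qed

lemma (in coprime_dprod_pair) bij_betw_combine_embeddings:
  "bij_betw (\<lambda>(\<beta>1, \<beta>2). combine_embeddings K A B G C D \<beta>1 \<beta>2)
     (regular_embeddings (K\<lparr>carrier := A\<rparr>) (G\<lparr>carrier := C\<rparr>)
       \<times> regular_embeddings (K\<lparr>carrier := B\<rparr>) (G\<lparr>carrier := D\<rparr>))
     (regular_embeddings K G)"
proof (rule bij_betwI[where g = "\<lambda>\<beta>. (restrict_embedding A C \<beta>, restrict_embedding B D \<beta>)"])
  show "(\<lambda>\<beta>. (restrict_embedding A C \<beta>, restrict_embedding B D \<beta>)) \<in> regular_embeddings K G \<rightarrow>
    regular_embeddings (K\<lparr>carrier := A\<rparr>) (G\<lparr>carrier := C\<rparr>)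
      \<times> regular_embeddings (K\<lparr>carrier := B\<rparr>) (G\<lparr>carrier := D\<rparr>)"
    using dprod_regular_embedding.restrict_embedding_regular dprod_regular_embedding.swap
      dprod_regular_embeddingI by fastforce
qed (auto simp: embedding_pair.combine_regular_embedding embedding_pair.restrict_combine
      dprod_regular_embedding.combine_restrict embedding_pairI dprod_regular_embeddingI)

context coprime_dprod_pair
begin

lemma aut_conj_rel_restrict:
  assumes "(\<beta>, \<beta>') \<in> aut_conj_rel K G"
  shows "(restrict_embedding A C \<beta>, restrict_embedding A C \<beta>')
    \<in> aut_conj_rel (K\<lparr>carrier := A\<rparr>) (G\<lparr>carrier := C\<rparr>)"
proof -
  obtain \<alpha> where \<beta>: "\<beta> \<in> regular_embeddings K G" and \<beta>': "\<beta>' \<in> regular_embeddings K G"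
    and \<alpha>: "\<alpha> \<in> auto G"
    and conj: "\<And>k x. k \<in> carrier K \<Longrightarrow> x \<in> carrier G \<Longrightarrow> \<beta>' k (\<alpha> x) = \<alpha> (\<beta> k x)"
    using aut_conj_relE[OF assms] by blast
  interpret \<beta>: dprod_regular_embedding K A B G C D \<beta> using dprod_regular_embeddingI[OF \<beta>] .
  interpret \<beta>': dprod_regular_embedding K A B G C D \<beta>' using dprod_regular_embeddingI[OF \<beta>'] .
  have "restrict_embedding A C \<beta>' a ((\<lambda>x\<in>C. \<alpha> x) c) = (\<lambda>x\<in>C. \<alpha> x) (restrict_embedding A C \<beta> a c)"
    if "a \<in> A" "c \<in> C" for a c
  proof -
    have "a \<in> carrier K" "c \<in> carrier G" using that K.A_subset G.A_subset by auto
    then show ?thesis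
      using that conj G.auto_closed(1)[OF \<alpha>] \<beta>.apply_A_closed by (simp add: restrict_embedding_def)
  qed
  then have "\<forall>a\<in>carrier (K\<lparr>carrier := A\<rparr>). \<forall>c\<in>carrier (G\<lparr>carrier := C\<rparr>).
      restrict_embedding A C \<beta>' a ((\<lambda>x\<in>C. \<alpha> x) c) = (\<lambda>x\<in>C. \<alpha> x) (restrict_embedding A C \<beta> a c)"
    by simp
  then show ?thesis
    using \<beta>.restrict_embedding_regular \<beta>'.restrict_embedding_regular G.auto_restrict[OF \<alpha>]
    unfolding aut_conj_rel_def by blast
qed

lemma aut_conj_rel_combine:
  assumes "(\<beta>1, \<beta>1') \<in> aut_conj_rel (K\<lparr>carrier := A\<rparr>) (G\<lparr>carrier := C\<rparr>)"
    and "(\<beta>2, \<beta>2') \<in> aut_conj_rel (K\<lparr>carrier := B\<rparr>) (G\<lparr>carrier := D\<rparr>)"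
  shows "(combine_embeddings K A B G C D \<beta>1 \<beta>2, combine_embeddings K A B G C D \<beta>1' \<beta>2') \<in>
    aut_conj_rel K G"
proof -
  obtain \<alpha>1 where \<beta>1: "\<beta>1 \<in> regular_embeddings (K\<lparr>carrier := A\<rparr>) (G\<lparr>carrier := C\<rparr>)"
    and \<beta>1': "\<beta>1' \<in> regular_embeddings (K\<lparr>carrier := A\<rparr>) (G\<lparr>carrier := C\<rparr>)"
    and \<alpha>1: "\<alpha>1 \<in> auto (G\<lparr>carrier := C\<rparr>)"
      and conj1: "\<And>a c. a \<in> A \<Longrightarrow> c \<in> C \<Longrightarrow> \<beta>1' a (\<alpha>1 c) = \<alpha>1 (\<beta>1 a c)"
    using aut_conj_relE[OF assms(1)] by auto
  obtain \<alpha>2 where \<beta>2: "\<beta>2 \<in> regular_embeddings (K\<lparr>carrier := B\<rparr>) (G\<lparr>carrier := D\<rparr>)"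
    and \<beta>2': "\<beta>2' \<in> regular_embeddings (K\<lparr>carrier := B\<rparr>) (G\<lparr>carrier := D\<rparr>)"
    and \<alpha>2: "\<alpha>2 \<in> auto (G\<lparr>carrier := D\<rparr>)"
      and conj2: "\<And>b d. b \<in> B \<Longrightarrow> d \<in> D \<Longrightarrow> \<beta>2' b (\<alpha>2 d) = \<alpha>2 (\<beta>2 b d)"
    using aut_conj_relE[OF assms(2)] by auto
  interpret P: embedding_pair K A B G C D \<beta>1 \<beta>2 using embedding_pairI[OF \<beta>1 \<beta>2] .
  interpret P': embedding_pair K A B G C D \<beta>1' \<beta>2' using embedding_pairI[OF \<beta>1' \<beta>2'] .
  let ?\<alpha> = "dprod_map G C D \<alpha>1 \<alpha>2"
  have "P'.\<Psi> k (?\<alpha> x) = ?\<alpha> (P.\<Psi> k x)" if k: "k \<in> carrier K" and x: "x \<in> carrier G" for k x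
  proof -
    have "P'.\<Psi> k (?\<alpha> x) = \<beta>1' (K.proj1 k) (\<alpha>1 (G.proj1 x)) \<otimes>\<^bsub>G\<^esub> \<beta>2' (K.proj2 k) (\<alpha>2 (G.proj2 x))"
      using P'.combine_apply[OF k hom_in_carrier[OF auto_imp_hom[OF G.dprod_map_auto[OF \<alpha>1 \<alpha>2]] x]]
        G.proj_dprod_map[OF \<alpha>1 \<alpha>2 x] by simp
    also have "\<dots> = \<alpha>1 (\<beta>1 (K.proj1 k) (G.proj1 x)) \<otimes>\<^bsub>G\<^esub> \<alpha>2 (\<beta>2 (K.proj2 k) (G.proj2 x))"
      using conj1 conj2 K.proj_closed[OF k] G.proj_closed[OF x] by simp
    also have "\<dots> = ?\<alpha> (P.\<Psi> k x)"
      using G.dprod_map_apply[OF \<alpha>1 \<alpha>2 P.combine_carrier[OF k x]] P.proj_combine[OF k x] by simp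
    finally show ?thesis .
  qed
  then show ?thesis
    using P.combine_regular_embedding P'.combine_regular_embedding G.dprod_map_auto[OF \<alpha>1 \<alpha>2]
    unfolding aut_conj_rel_def by blast
qed

lemma combine_aut_conj_rel_iff:
  assumes "embedding_pair K A B G C D \<beta>1 \<beta>2" "embedding_pair K A B G C D \<beta>1' \<beta>2'"
  shows "(combine_embeddings K A B G C D \<beta>1 \<beta>2, combine_embeddings K A B G C D \<beta>1' \<beta>2') \<in>
    aut_conj_rel K G
    \<longleftrightarrow> (\<beta>1, \<beta>1') \<in> aut_conj_rel (K\<lparr>carrier := A\<rparr>) (G\<lparr>carrier := C\<rparr>)
      \<and> (\<beta>2, \<beta>2') \<in> aut_conj_rel (K\<lparr>carrier := B\<rparr>) (G\<lparr>carrier := D\<rparr>)"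
  using aut_conj_rel_combine aut_conj_rel_restrict coprime_dprod_pair.aut_conj_rel_restrict[OF swap]
    embedding_pair.restrict_combine[OF assms(1)] embedding_pair.restrict_combine[OF assms(2)]
      by metis

end

section \<open>Counting Hopf-Galois structures\<close>

lemma card_quotient_product:
  assumes bij: "bij_betw f (E1 \<times> E2) E"
    and R1: "R1 \<subseteq> E1 \<times> E1" "\<And>x. x \<in> E1 \<Longrightarrow> (x, x) \<in> R1"
    and R2: "R2 \<subseteq> E2 \<times> E2" "\<And>y. y \<in> E2 \<Longrightarrow> (y, y) \<in> R2"
    and R: "R \<subseteq> E \<times> E"
    and rel: "\<And>x y x' y'. x \<in> E1 \<Longrightarrow> y \<in> E2 \<Longrightarrow> x' \<in> E1 \<Longrightarrow> y' \<in> E2 \<Longrightarrow>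
       (f (x, y), f (x', y')) \<in> R \<longleftrightarrow> (x, x') \<in> R1 \<and> (y, y') \<in> R2"
  shows "card (E // R) = card (E1 // R1) * card (E2 // R2)"
proof -
  have f: "inj_on f (E1 \<times> E2)" "f ` (E1 \<times> E2) = E" using bij by (auto simp: bij_betw_def)
  have Image_f: "R `` {f (x, y)} = f ` (R1 `` {x} \<times> R2 `` {y})" if "x \<in> E1" "y \<in> E2" for x y
  proof (intro equalityI subsetI)
    fix z assume "z \<in> R `` {f (x, y)}"
    moreover from this obtain x' y' where "x' \<in> E1" "y' \<in> E2" "z = f (x', y')" using R f(2) by blast
    ultimately show "z \<in> f ` (R1 `` {x} \<times> R2 `` {y})" using rel that by auto
  next
    fix z assume "z \<in> f ` (R1 `` {x} \<times> R2 `` {y})"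
    then obtain x' y' where "(x, x') \<in> R1" "(y, y') \<in> R2" "z = f (x', y')" by blast
    moreover from this have "x' \<in> E1" "y' \<in> E2" using R1(1) R2(1) by auto
    ultimately show "z \<in> R `` {f (x, y)}" using rel that by auto
  qed
  define F where "F = (\<lambda>(U, V). f ` (U \<times> V))"
  have "E // R = F ` ((E1 // R1) \<times> (E2 // R2))"
  proof (intro equalityI subsetI)
    fix Z assume "Z \<in> E // R"
    then obtain x y where xy: "x \<in> E1" "y \<in> E2" "Z = R `` {f (x, y)}"
      using f(2) by (auto elim!: quotientE)
    then have "Z = F (R1 `` {x}, R2 `` {y})" using Image_f unfolding F_def by simp
    moreover have "(R1 `` {x}, R2 `` {y}) \<in> (E1 // R1) \<times> (E2 // R2)"
      using quotientI[OF xy(1)] quotientI[OF xy(2)] by simp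
    ultimately show "Z \<in> F ` ((E1 // R1) \<times> (E2 // R2))" by (simp add: rev_image_eqI)
  next
    fix Z assume "Z \<in> F ` ((E1 // R1) \<times> (E2 // R2))"
    then obtain x y where xy: "x \<in> E1" "y \<in> E2" "Z = F (R1 `` {x}, R2 `` {y})"
      by (auto elim!: quotientE)
    then have "Z = R `` {f (x, y)}" using Image_f unfolding F_def by simp
    moreover have "f (x, y) \<in> E" using f(2) xy by blast
    ultimately show "Z \<in> E // R" using quotientI by simp
  qed
  moreover have "inj_on F ((E1 // R1) \<times> (E2 // R2))"
  proof (rule inj_onI)
    fix p p' assume "p \<in> (E1 // R1) \<times> (E2 // R2)" "p' \<in> (E1 // R1) \<times> (E2 // R2)" "F p = F p'"
    moreover obtain U V U' V' where "p = (U, V)" "p' = (U', V')" by (cases p, cases p')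
    ultimately have XY: "(U, V) \<in> (E1 // R1) \<times> (E2 // R2)" "(U', V') \<in> (E1 // R1) \<times> (E2 // R2)"
      and "F (U, V) = F (U', V')" by auto
    have "U \<subseteq> E1" "U' \<subseteq> E1" "V \<subseteq> E2" "V' \<subseteq> E2"
      using XY R1(1) R2(1) by (auto elim!: quotientE)
    then have "U \<times> V = U' \<times> V'"
      using \<open>F (U, V) = F (U', V')\<close> inj_on_image_eq_iff[OF f(1), of "U \<times> V" "U' \<times> V'"]
      unfolding F_def by auto
    moreover have "U \<noteq> {}" "V \<noteq> {}" using XY R1(2) R2(2) by (force elim!: quotientE)+
    ultimately show "p = p'" using \<open>p = (U, V)\<close> \<open>p' = (U', V')\<close> by (metis times_eq_iff)
  qed
  ultimately show ?thesis by (simp add: card_image card_cartesian_product)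
qed

theorem (in coprime_dprod_pair) hgs_count_dprod:
  "hgs_count K G =
    hgs_count (K\<lparr>carrier := A\<rparr>) (G\<lparr>carrier := C\<rparr>) * hgs_count (K\<lparr>carrier := B\<rparr>) (G\<lparr>carrier := D\<rparr>)"
  unfolding hgs_count_def
proof (rule card_quotient_product[OF bij_betw_combine_embeddings])
  show "\<And>\<beta>. \<beta> \<in> regular_embeddings (K\<lparr>carrier := A\<rparr>) (G\<lparr>carrier := C\<rparr>) \<Longrightarrow>
      (\<beta>, \<beta>) \<in> aut_conj_rel (K\<lparr>carrier := A\<rparr>) (G\<lparr>carrier := C\<rparr>)"
    using group.aut_conj_rel_refl[OF G.subgroup_imp_group[OF G.subgroup_A]] .
  show "\<And>\<beta>. \<beta> \<in> regular_embeddings (K\<lparr>carrier := B\<rparr>) (G\<lparr>carrier := D\<rparr>) \<Longrightarrow>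
      (\<beta>, \<beta>) \<in> aut_conj_rel (K\<lparr>carrier := B\<rparr>) (G\<lparr>carrier := D\<rparr>)"
    using group.aut_conj_rel_refl[OF G.subgroup_imp_group[OF G.subgroup_B]] .
  show "\<And>\<beta>1 \<beta>2 \<beta>1' \<beta>2'.
    \<beta>1 \<in> regular_embeddings (K\<lparr>carrier := A\<rparr>) (G\<lparr>carrier := C\<rparr>) \<Longrightarrow>
    \<beta>2 \<in> regular_embeddings (K\<lparr>carrier := B\<rparr>) (G\<lparr>carrier := D\<rparr>) \<Longrightarrow>
    \<beta>1' \<in> regular_embeddings (K\<lparr>carrier := A\<rparr>) (G\<lparr>carrier := C\<rparr>) \<Longrightarrow>
    \<beta>2' \<in> regular_embeddings (K\<lparr>carrier := B\<rparr>) (G\<lparr>carrier := D\<rparr>) \<Longrightarrow>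
    (((\<lambda>(\<beta>1, \<beta>2). combine_embeddings K A B G C D \<beta>1 \<beta>2) (\<beta>1, \<beta>2),
      (\<lambda>(\<beta>1, \<beta>2). combine_embeddings K A B G C D \<beta>1 \<beta>2) (\<beta>1', \<beta>2')) \<in> aut_conj_rel K G) =
    ((\<beta>1, \<beta>1') \<in> aut_conj_rel (K\<lparr>carrier := A\<rparr>) (G\<lparr>carrier := C\<rparr>) \<and>
     (\<beta>2, \<beta>2') \<in> aut_conj_rel (K\<lparr>carrier := B\<rparr>) (G\<lparr>carrier := D\<rparr>))"
    using combine_aut_conj_rel_iff embedding_pairI by simp
qed (auto simp: aut_conj_rel_def)

theorem hgs_count_set_mult:
  fixes K :: "('a, 'c) monoid_scheme" and G :: "('b, 'd) monoid_scheme"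
  assumes "coprime_normal_subgroups K A B" "coprime_normal_subgroups G C D"
    and "card A = card C" "card B = card D"
  shows "hgs_count (K\<lparr>carrier := A <#>\<^bsub>K\<^esub> B\<rparr>) (G\<lparr>carrier := C <#>\<^bsub>G\<^esub> D\<rparr>)
    = hgs_count (K\<lparr>carrier := A\<rparr>) (G\<lparr>carrier := C\<rparr>) * hgs_count (K\<lparr>carrier := B\<rparr>) (G\<lparr>carrier := D\<rparr>)"
proof -
  interpret coprime_dprod_pair "K\<lparr>carrier := A <#>\<^bsub>K\<^esub> B\<rparr>" A B "G\<lparr>carrier := C <#>\<^bsub>G\<^esub> D\<rparr>" C D
    using coprime_normal_subgroups.coprime_dprod_set_mult[OF assms(1)]
      coprime_normal_subgroups.coprime_dprod_set_mult[OF assms(2)] assms(3,4)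
    by (simp add: coprime_dprod_pair_def coprime_dprod_pair_axioms_def)
  show ?thesis using hgs_count_dprod by simp
qed

lemma hgs_count_trivial:
  assumes K: "group K" "carrier K = {\<one>\<^bsub>K\<^esub>}" and G: "group G" "carrier G = {\<one>\<^bsub>G\<^esub>}"
  shows "hgs_count K G = 1"
proof -
  let ?\<beta> = "\<lambda>k\<in>carrier K. \<lambda>x\<in>carrier G. x"
  have id: "(\<lambda>x\<in>carrier G. x) \<in> Bij (carrier G)" "(\<lambda>x\<in>carrier G. x) \<in> holomorph G"
    using id_Bij group.id_in_holomorph[OF G(1)] by auto
  have "\<one>\<^bsub>K\<^esub> \<otimes>\<^bsub>K\<^esub> \<one>\<^bsub>K\<^esub> = \<one>\<^bsub>K\<^esub>" using group.is_monoid[OF K(1)] by (simp add: monoid.l_one)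
  then have "?\<beta> \<in> hom K (BijGroup (carrier G))"
    using id(1) K G by (auto simp: hom_def BijGroup_def compose_def fun_eq_iff)
  then have "?\<beta> \<in> regular_embeddings K G"
    using id(2) K G by (simp add: regular_embeddings_def)
  moreover have "\<beta> = ?\<beta>" if "\<beta> \<in> regular_embeddings K G" for \<beta>
    using regular_embeddings_eqI[OF that] calculation
      group_action.id_eq_one[OF regular_embedding_group_action[OF K(1) that]] K G by auto
  ultimately have "regular_embeddings K G = {?\<beta>}" by blast
  then show ?thesis by (simp add: hgs_count_def singleton_quotient)
qed

section \<open>Sylow subgroups of finite nilpotent groups\<close>

lemma (in group) lower_central_subset: "lower_central G i \<subseteq> carrier G"
  by (induction i) (auto intro!: generate_incl)

text \<open>In a nilpotent group every proper subgroup is properly contained in its normalizer: take the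
  last term of the lower central series not contained in M; its elements normalize M.\<close>
lemma (in group) nilpotent_normalizer_grows:
  assumes "lower_central G k = {\<one>}" "subgroup M G" "M \<noteq> carrier G"
  obtains y where "y \<in> carrier G" "y \<notin> M" "\<And>h. h \<in> M \<Longrightarrow> y \<otimes> h \<otimes> inv y \<in> M"
proof -
  have M: "M \<subseteq> carrier G" using assms(2) subgroup.subset by blast
  have "lower_central G k \<subseteq> M" using assms(1,2) subgroup.one_closed by simp
  moreover have "\<not> lower_central G 0 \<subseteq> M" using assms(3) M by auto
  ultimately have "\<exists>i<k. (\<forall>j\<le>i. \<not> lower_central G j \<subseteq> M) \<and> lower_central G (Suc i) \<subseteq> M"
    by (rule ex_least_nat_less)
  then obtain i where i: "lower_central G (Suc i) \<subseteq> M" "\<not> lower_central G i \<subseteq> M" by blast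
  then obtain y where y: "y \<in> lower_central G i" "y \<notin> M" by blast
  have yc: "y \<in> carrier G" using y(1) lower_central_subset by blast
  have "y \<otimes> h \<otimes> inv y \<in> M" if h: "h \<in> M" for h
  proof -
    have hc: "h \<in> carrier G" using h M by blast
    have "inv h \<otimes> y \<otimes> inv (inv h) \<otimes> inv y
        \<in> (\<Union>x \<in> carrier G. \<Union>y \<in> lower_central G i. {x \<otimes> y \<otimes> inv x \<otimes> inv y})"
      using hc y(1) by blast
    then have "inv h \<otimes> y \<otimes> inv (inv h) \<otimes> inv y \<in> lower_central G (Suc i)"
      by (simp only: lower_central.simps generate.incl)
    then have "h \<otimes> (inv h \<otimes> y \<otimes> h \<otimes> inv y) \<in> M"
      using i(1) subgroup.m_closed[OF assms(2) h] hc by auto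
    then show ?thesis using hc yc by (simp add: m_assoc[symmetric])
  qed
  then show ?thesis using that yc y(2) by blast
qed

lemma (in group) normalizer_eq:
  "H \<subseteq> carrier G \<Longrightarrow> normalizer G H = {g \<in> carrier G. g <# H #> inv g = H}"
  by (simp add: normalizer_def stabilizer_def)

lemma (in group) conjugate_eq_image:
  "g \<in> carrier G \<Longrightarrow> H \<subseteq> carrier G \<Longrightarrow> g <# H #> inv g = (\<lambda>h. g \<otimes> h \<otimes> inv g) ` H"
  by (auto simp: l_coset_def r_coset_def)

lemma (in group) card_conjugate:
  assumes "g \<in> carrier G" "H \<subseteq> carrier G" shows "card (g <# H #> inv g) = card H"
proof -
  have "inj_on (\<lambda>h. g \<otimes> h \<otimes> inv g) H"
  proof (rule inj_onI)
    fix x y assume "x \<in> H" "y \<in> H" "g \<otimes> x \<otimes> inv g = g \<otimes> y \<otimes> inv g"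
    then show "x = y" using assms subsetD[OF assms(2)] by simp
  qed
  then show ?thesis using assms by (simp add: conjugate_eq_image card_image)
qed

text \<open>Inside the normalizer of a Sylow p-subgroup P, the product of P with a p-subgroup Q of the same
  order is a p-subgroup of order \<open>|P| |Q| / |P \<inter> Q|\<close>; maximality of |P| forces Q = P.\<close>
lemma (in group) sylow_eq_if_subset_normalizer:
  assumes fin: "finite (carrier G)" and p: "Factorial_Ring.prime (p::nat)"
    and P: "subgroup P G" "card P = p ^ multiplicity p (order G)"
    and Q: "subgroup Q G" "card Q = card P" "Q \<subseteq> normalizer G P"
  shows "P = Q"
proof -
  let ?N = "normalizer G P" and ?a = "multiplicity p (order G)"
  have P_sub: "P \<subseteq> carrier G" using P(1) subgroup.subset by blast
  have N: "subgroup ?N G" using normalizer_imp_subgroup[OF P_sub] .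
  interpret N: group "G\<lparr>carrier := ?N\<rparr>" using subgroup_imp_group[OF N] .
  have PN: "P \<lhd> G\<lparr>carrier := ?N\<rparr>" using subgroup_in_normalizer[OF P(1)] .
  have QN: "subgroup Q (G\<lparr>carrier := ?N\<rparr>)" using subgroup_incl[OF Q(1) N Q(3)] .
  have set_mult: "P <#>\<^bsub>G\<lparr>carrier := ?N\<rparr>\<^esub> Q = P <#> Q" by (simp add: set_mult_def)
  have "card (P <#> Q) * card (P \<inter> Q) = card P * card Q"
    using N.card_set_mult_normal[OF PN QN] set_mult by simp
  moreover obtain b where b: "b \<le> ?a" "card (P \<inter> Q) = p ^ b"
    using card_dvd_of_subgroup_subset[OF P(1) subgroups_Inter_pair[OF P(1) Q(1)]] P(2)
      divides_primepow_nat[OF p] by auto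
  ultimately have "card (P <#> Q) * p ^ b = p ^ (?a + ?a - b) * p ^ b"
    using P(2) Q(2) by (simp add: power_add[symmetric])
  then have "card (P <#> Q) = p ^ (?a + ?a - b)" using prime_gt_0_nat[OF p] by simp
  moreover have "subgroup (P <#> Q) G"
    using incl_subgroup[OF N N.mult_norm_subgroup[OF PN QN]] set_mult by simp
  then have "card (P <#> Q) dvd order G"
    using card_dvd_of_subgroup_subset[OF subgroup_self _ subgroup.subset]
      by (simp add: order_def)
  moreover have "order G \<noteq> 0" using fin by (auto simp: order_def)
  ultimately have "?a + ?a - b \<le> ?a"
    using multiplicity_geI not_prime_unit p by metis
  then have "b = ?a" using b(1) by linarith
  then have "card (P \<inter> Q) = card P" using b(2) P(2) by simp
  then have "P \<subseteq> Q" using card_subset_eq[OF finite_subset[OF P_sub fin], of "P \<inter> Q"] by blast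
  then show ?thesis using card_subset_eq[OF finite_subset[OF subgroup.subset[OF Q(1)] fin]] Q(2)
    by simp
qed

lemma (in group) nilpotent_imp_sylow_normal:
  assumes fin: "finite (carrier G)" and nil: "lower_central G k = {\<one>}"
    and p: "Factorial_Ring.prime (p::nat)"
    and P: "subgroup P G" "card P = p ^ multiplicity p (order G)"
  shows "P \<lhd> G"
proof -
  let ?N = "normalizer G P"
  have P_sub: "P \<subseteq> carrier G" using P(1) subgroup.subset by blast
  have PN: "P \<lhd> G\<lparr>carrier := ?N\<rparr>" using subgroup_in_normalizer[OF P(1)] .
  then have P_N: "P \<subseteq> ?N" using normal_imp_subgroup subgroup.subset by force
  have "?N = carrier G"
  proof (rule ccontr)
    assume "?N \<noteq> carrier G"
    then obtain y where y: "y \<in> carrier G" "y \<notin> ?N" and yN: "\<And>h. h \<in> ?N \<Longrightarrow> y \<otimes> h \<otimes> inv y \<in> ?N"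
      using nilpotent_normalizer_grows[OF nil normalizer_imp_subgroup[OF P_sub]] by blast
    let ?Q = "y <# P #> inv y"
    have "subgroup ?Q G" using subgroup_conjugation_is_surj1[OF inv_closed[OF y(1)] P(1)] y(1)
      by simp
    moreover have "?Q \<subseteq> ?N" using yN P_N conjugate_eq_image[OF y(1) P_sub] by auto
    ultimately have "P = ?Q"
      using sylow_eq_if_subset_normalizer[OF fin p P] card_conjugate[OF y(1) P_sub] by simp
    then show False using y normalizer_eq[OF P_sub] by simp
  qed
  then show ?thesis using PN by simp
qed

section \<open>The product formula\<close>

lemma hgs_count_prod_normal_subgroups:
  fixes \<Gamma> :: "('a, 'c) monoid_scheme" and G :: "('b, 'd) monoid_scheme" and e :: "nat \<Rightarrow> nat"
  assumes \<Gamma>: "group \<Gamma>" "finite (carrier \<Gamma>)" and G: "group G" "finite (carrier G)" and "finite S"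
    and "\<And>p. p \<in> S \<Longrightarrow> Factorial_Ring.prime p"
    and "\<And>p. p \<in> S \<Longrightarrow> P p \<lhd> \<Gamma> \<and> card (P p) = p ^ e p"
    and "\<And>p. p \<in> S \<Longrightarrow> Q p \<lhd> G \<and> card (Q p) = p ^ e p"
  shows "\<exists>H H'. H \<lhd> \<Gamma> \<and> H' \<lhd> G \<and> card H = (\<Prod>p\<in>S. p ^ e p) \<and> card H' = (\<Prod>p\<in>S. p ^ e p) \<and>
    hgs_count (\<Gamma>\<lparr>carrier := H\<rparr>) (G\<lparr>carrier := H'\<rparr>) =
      (\<Prod>p\<in>S. hgs_count (\<Gamma>\<lparr>carrier := P p\<rparr>) (G\<lparr>carrier := Q p\<rparr>))"
  using assms(5-)
proof (induction S rule: finite_induct)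
  case empty
  have "hgs_count (\<Gamma>\<lparr>carrier := {\<one>\<^bsub>\<Gamma>\<^esub>}\<rparr>) (G\<lparr>carrier := {\<one>\<^bsub>G\<^esub>}\<rparr>) = 1"
    by (rule hgs_count_trivial)
      (simp_all add: group.subgroup_imp_group[OF \<Gamma>(1) group.triv_subgroup[OF \<Gamma>(1)]]
        group.subgroup_imp_group[OF G(1) group.triv_subgroup[OF G(1)]])
  then show ?case using group.one_is_normal[OF \<Gamma>(1)] group.one_is_normal[OF G(1)] by fastforce
next
  case (insert q S)
  have "\<exists>H H'. H \<lhd> \<Gamma> \<and> H' \<lhd> G \<and> card H = (\<Prod>p\<in>S. p ^ e p) \<and> card H' = (\<Prod>p\<in>S. p ^ e p) \<and>
    hgs_count (\<Gamma>\<lparr>carrier := H\<rparr>) (G\<lparr>carrier := H'\<rparr>) =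
      (\<Prod>p\<in>S. hgs_count (\<Gamma>\<lparr>carrier := P p\<rparr>) (G\<lparr>carrier := Q p\<rparr>))"
    by (rule insert.IH) (simp_all add: insert.prems)
  then obtain H H' where H: "H \<lhd> \<Gamma>" "H' \<lhd> G" "card H = (\<Prod>p\<in>S. p ^ e p)" "card H' = (\<Prod>p\<in>S. p ^ e p)"
    and count: "hgs_count (\<Gamma>\<lparr>carrier := H\<rparr>) (G\<lparr>carrier := H'\<rparr>) =
      (\<Prod>p\<in>S. hgs_count (\<Gamma>\<lparr>carrier := P p\<rparr>) (G\<lparr>carrier := Q p\<rparr>))"
    by blast
  have "coprime (p ^ e p) (q ^ e q)" if "p \<in> S" for p
    using primes_coprime[of p q] insert.prems(1) insert.hyps(2) that
      by (auto simp: coprime_power_left_iff)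
  then have "coprime (\<Prod>p\<in>S. p ^ e p) (q ^ e q)" by (rule prod_coprime_left)
  then interpret \<Gamma>': coprime_normal_subgroups \<Gamma> H "P q"
    using \<Gamma> H(1,3) insert.prems(2)
    by (simp add: coprime_normal_subgroups_def coprime_normal_subgroups_axioms_def)
  interpret G': coprime_normal_subgroups G H' "Q q"
    using G H(2,4) insert.prems(3) \<open>coprime _ _\<close>
    by (simp add: coprime_normal_subgroups_def coprime_normal_subgroups_axioms_def)
  have "hgs_count (\<Gamma>\<lparr>carrier := H <#>\<^bsub>\<Gamma>\<^esub> P q\<rparr>) (G\<lparr>carrier := H' <#>\<^bsub>G\<^esub> Q q\<rparr>)
      = (\<Prod>p\<in>insert q S. hgs_count (\<Gamma>\<lparr>carrier := P p\<rparr>) (G\<lparr>carrier := Q p\<rparr>))"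
    using hgs_count_set_mult[OF \<Gamma>'.coprime_normal_subgroups_axioms G'.coprime_normal_subgroups_axioms]
      H(3,4) insert.prems(2,3) count insert.hyps by (simp add: mult.commute)
  moreover have "card (H <#>\<^bsub>\<Gamma>\<^esub> P q) = (\<Prod>p\<in>insert q S. p ^ e p)"
    "card (H' <#>\<^bsub>G\<^esub> Q q) = (\<Prod>p\<in>insert q S. p ^ e p)"
    using \<Gamma>'.card_set_mult G'.card_set_mult H(3,4) insert.prems(2,3) insert.hyps
      by (simp_all add: mult.commute)
  moreover have "H <#>\<^bsub>\<Gamma>\<^esub> P q \<lhd> \<Gamma>" "H' <#>\<^bsub>G\<^esub> Q q \<lhd> G"
    using \<Gamma>'.normal_subgroup_set_mult_closed[OF \<Gamma>'.normal_A \<Gamma>'.normal_B]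
      G'.normal_subgroup_set_mult_closed[OF G'.normal_A G'.normal_B] by auto
  ultimately show ?case by blast
qed

lemma hgs_count_eq_prod_normal_subgroups:
  fixes \<Gamma> :: "('a, 'c) monoid_scheme" and G :: "('b, 'd) monoid_scheme" and e :: "nat \<Rightarrow> nat"
  assumes \<Gamma>: "group \<Gamma>" "finite (carrier \<Gamma>)" "order \<Gamma> = (\<Prod>p\<in>S. p ^ e p)"
    and G: "group G" "finite (carrier G)" "order G = (\<Prod>p\<in>S. p ^ e p)"
    and "finite S" "\<And>p. p \<in> S \<Longrightarrow> Factorial_Ring.prime p"
    and "\<And>p. p \<in> S \<Longrightarrow> P p \<lhd> \<Gamma> \<and> card (P p) = p ^ e p"
    and "\<And>p. p \<in> S \<Longrightarrow> Q p \<lhd> G \<and> card (Q p) = p ^ e p"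
  shows "hgs_count \<Gamma> G = (\<Prod>p\<in>S. hgs_count (\<Gamma>\<lparr>carrier := P p\<rparr>) (G\<lparr>carrier := Q p\<rparr>))"
proof -
  obtain H H' where H: "H \<lhd> \<Gamma>" "H' \<lhd> G" "card H = (\<Prod>p\<in>S. p ^ e p)" "card H' = (\<Prod>p\<in>S. p ^ e p)"
    and count: "hgs_count (\<Gamma>\<lparr>carrier := H\<rparr>) (G\<lparr>carrier := H'\<rparr>) =
      (\<Prod>p\<in>S. hgs_count (\<Gamma>\<lparr>carrier := P p\<rparr>) (G\<lparr>carrier := Q p\<rparr>))"
    using hgs_count_prod_normal_subgroups[OF \<Gamma>(1,2) G(1,2) assms(7-)] by blast
  have "H = carrier \<Gamma>" "H' = carrier G"
    using card_subset_eq \<Gamma>(2,3) G(2,3) H(1-4) normal_imp_subgroup subgroup.subset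
      by (metis order_def)+
  then show ?thesis using count by simp
qed

theorem theorem1:
  fixes \<Gamma> :: "('a, 'c) monoid_scheme" and G :: "('b, 'd) monoid_scheme"
    and n :: nat
    and P :: "nat \<Rightarrow> 'a set" and Q :: "nat \<Rightarrow> 'b set"
  assumes "finite (carrier \<Gamma>)" and "nilpotent_group \<Gamma>" and "order \<Gamma> = n"
    and "finite (carrier G)" and "nilpotent_group G" and "order G = n"
    and "\<And>p. p \<in> prime_factors n \<Longrightarrow> sylow_subgroup \<Gamma> p (P p)"
    and "\<And>p. p \<in> prime_factors n \<Longrightarrow> sylow_subgroup G p (Q p)"
  shows "hgs_count \<Gamma> G =
    (\<Prod>p \<in> prime_factors n. hgs_count (\<Gamma>\<lparr>carrier := P p\<rparr>) (G\<lparr>carrier := Q p\<rparr>))"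
proof (rule hgs_count_eq_prod_normal_subgroups)
  obtain k k' where \<Gamma>: "group \<Gamma>" "lower_central \<Gamma> k = {\<one>\<^bsub>\<Gamma>\<^esub>}"
    and G: "group G" "lower_central G k' = {\<one>\<^bsub>G\<^esub>}"
    using assms(2,5) unfolding nilpotent_group_def by blast
  then show "group \<Gamma>" "group G" by simp_all
  have "n > 0"
    using assms(1,3) monoid.one_closed[OF group.is_monoid[OF \<Gamma>(1)]]
      by (auto simp: order_def card_gt_0_iff)
  then show "order \<Gamma> = (\<Prod>p \<in> prime_factors n. p ^ multiplicity p n)"
    "order G = (\<Prod>p \<in> prime_factors n. p ^ multiplicity p n)"
    using prime_factorization_nat[of n] assms(3,6) by simp_all
  fix p assume p: "p \<in> prime_factors n"
  then show "Factorial_Ring.prime p" by (rule in_prime_factors_imp_prime)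
  show "P p \<lhd> \<Gamma> \<and> card (P p) = p ^ multiplicity p n" "Q p \<lhd> G \<and> card (Q p) = p ^ multiplicity p n"
    using group.nilpotent_imp_sylow_normal[OF \<Gamma>(1) assms(1) \<Gamma>(2)]
      group.nilpotent_imp_sylow_normal[OF G(1) assms(4) G(2)]
      assms(7,8)[OF p] assms(3,6) in_prime_factors_imp_prime[OF p]
        by (auto simp: sylow_subgroup_def)
qed (use assms in simp_all)

end
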